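(* Let $$B(p)=\prod_{i=1}^r\big(B_{[c_i]}(p)\big)^{m_i}\ \prod_{i=1}^{\star\, s}\ \prod_{j=1}^{\star\, n_i}B_{\alpha_{ij}}(p)$$ be a finite Blaschke product in the unit ball $\mathbb B$ (with $c_i,\alpha_{ij}\in\mathbb B\setminus\{0\}$), of degree $d=\sum_{i=1}^r2m_i+\sum_{i=1}^sn_i$. Then the reproducing kernel Hilbert space $\mathcal H(B)$ with reproducing kernel $K_B(p,q)=\sum_{n=0}^\infty p^n\big(1-B(p)\overline{B(q)}\big)\bar q^n$, $p,q\in\mathbb B$, has dimension $\dim\mathcal H(B)=d$.
   Context: $B_a(p)=(1-p\bar a)^{-\star}\star(a-p)\frac{\bar a}{|a|}$ for $a\in\mathbb B\setminus\{0\}$, and $B_{[a]}(p)=(1-2{\rm Re}(a)p+p^2|a|^2)^{-1}(|a|^2-2{\rm Re}(a)p+p^2)$; $\star$ denotes the slice hyperholomorphic ($\star$-)product and $f^{-\star}$ the $\star$-inverse. $\mathcal H(B)$ is a right quaternionic Hilbert space of slice hyperholomorphic functions on $\mathbb B$. *)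

theory Defs
  imports "HOL-Analysis.Analysis"
begin

text \<open>A quaternion z + w j is represented by the pair (z, w) of complex numbers.
  Addition, real scaling, the norm (= the Euclidean norm of R^4) and the
  topology are those of the product type complex \<times> complex.\<close>

type_synonym quat = "complex \<times> complex"

definition qmul :: "quat \<Rightarrow> quat \<Rightarrow> quat" where
  "qmul x y = (fst x * fst y - snd x * cnj (snd y), fst x * snd y + snd x * cnj (fst y))"

definition qcnj :: "quat \<Rightarrow> quat" where
  "qcnj x = (cnj (fst x), - snd x)"

definition qre :: "quat \<Rightarrow> real" where
  "qre x = Re (fst x)"

definition qreal :: "real \<Rightarrow> quat" where
  "qreal r = (complex_of_real r, 0)"

fun qpow :: "quat \<Rightarrow> nat \<Rightarrow> quat" where
  "qpow x 0 = qreal 1"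
| "qpow x (Suc n) = qmul x (qpow x n)"

definition qball :: "quat set" where
  "qball = {p. norm p < 1}"

text \<open>A slice hyperholomorphic function on the unit ball is f(p) = \<Sum> p^n a_n
  (coefficients on the right); we work with coefficient sequences.\<close>

definition qeval :: "(nat \<Rightarrow> quat) \<Rightarrow> quat \<Rightarrow> quat" where
  "qeval a p = (\<Sum>n. qmul (qpow p n) (a n))"

definition cstar :: "(nat \<Rightarrow> quat) \<Rightarrow> (nat \<Rightarrow> quat) \<Rightarrow> (nat \<Rightarrow> quat)" where
  "cstar a b = (\<lambda>n. \<Sum>k\<le>n. qmul (a k) (b (n - k)))"

definition qunit :: "nat \<Rightarrow> quat" where
  "qunit = (\<lambda>n. if n = 0 then qreal 1 else 0)"

definition sinv :: "(nat \<Rightarrow> quat) \<Rightarrow> (nat \<Rightarrow> quat)" where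
  "sinv a = (THE c. cstar a c = qunit \<and> cstar c a = qunit)"

fun cpow :: "(nat \<Rightarrow> quat) \<Rightarrow> nat \<Rightarrow> (nat \<Rightarrow> quat)" where
  "cpow a 0 = qunit"
| "cpow a (Suc m) = cstar a (cpow a m)"

definition cpoly :: "quat list \<Rightarrow> (nat \<Rightarrow> quat)" where
  "cpoly xs = (\<lambda>n. if n < length xs then xs ! n else 0)"

definition cscal :: "(nat \<Rightarrow> quat) \<Rightarrow> quat \<Rightarrow> (nat \<Rightarrow> quat)" where
  "cscal a c = (\<lambda>n. qmul (a n) c)"

text \<open>B_a(p) = (1 - p a')^{-\<star>} \<star> (a - p) a'/|a|, where a' is the conjugate of a.\<close>
definition blaschke :: "quat \<Rightarrow> (nat \<Rightarrow> quat)" where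
  "blaschke a = cscal (cstar (sinv (cpoly [qreal 1, - qcnj a])) (cpoly [a, - qreal 1]))
                      ((1 / norm a) *\<^sub>R qcnj a)"

text \<open>B_[a](p) = (1 - 2Re(a) p + p^2 |a|^2)^{-1} (|a|^2 - 2 Re(a) p + p^2).\<close>
definition blaschke_sph :: "quat \<Rightarrow> (nat \<Rightarrow> quat)" where
  "blaschke_sph a = cstar
      (sinv (cpoly [qreal 1, qreal (- 2 * qre a), qreal ((norm a)\<^sup>2)]))
      (cpoly [qreal ((norm a)\<^sup>2), qreal (- 2 * qre a), qreal 1])"

text \<open>The finite Blaschke product
  \<Prod>_{i} (B_[c_i])^{m_i} \<star> \<Prod>^\<star>_{i} \<Prod>^\<star>_{j} B_{\<alpha>_{ij}};
  cms lists the pairs (c_i, m_i), als lists the lists [\<alpha>_{i1},...,\<alpha>_{in_i}].\<close>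
definition blaschke_prod :: "(quat \<times> nat) list \<Rightarrow> quat list list \<Rightarrow> (nat \<Rightarrow> quat)" where
  "blaschke_prod cms als =
     cstar (foldr (\<lambda>(c, m) acc. cstar (cpow (blaschke_sph c) m) acc) cms qunit)
           (foldr (\<lambda>a acc. cstar (blaschke a) acc) (concat als) qunit)"

definition blaschke_degree :: "(quat \<times> nat) list \<Rightarrow> quat list list \<Rightarrow> nat" where
  "blaschke_degree cms als = (\<Sum>cm\<leftarrow>cms. 2 * snd cm) + (\<Sum>al\<leftarrow>als. length al)"

definition kernelB :: "(nat \<Rightarrow> quat) \<Rightarrow> quat \<Rightarrow> quat \<Rightarrow> quat" where
  "kernelB b p q = (\<Sum>n. qmul (qmul (qpow p n) (qreal 1 - qmul (qeval b p) (qcnj (qeval b q))))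
                              (qcnj (qpow q n)))"

text \<open>Right linear span of the kernel functions p \<mapsto> K(p,q) a (q in the ball);
  functions are considered on the ball only.\<close>
definition kernel_span :: "(quat \<Rightarrow> quat \<Rightarrow> quat) \<Rightarrow> (quat \<Rightarrow> quat) set" where
  "kernel_span K = {f. \<exists>(N::nat) qs as. (\<forall>i<N. qs i \<in> qball) \<and>
       (\<forall>p\<in>qball. f p = (\<Sum>i<N. qmul (K p (qs i)) (as i)))}"

definition rdim_eq :: "(quat \<Rightarrow> quat) set \<Rightarrow> nat \<Rightarrow> bool" where
  "rdim_eq V d \<longleftrightarrow> (\<exists>fs :: nat \<Rightarrow> quat \<Rightarrow> quat.
      (\<forall>i<d. fs i \<in> V) \<and>
      (\<forall>a. (\<forall>p\<in>qball. (\<Sum>i<d. qmul (fs i p) (a i)) = 0) \<longrightarrow> (\<forall>i<d. a i = 0)) \<and>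
      (\<forall>f\<in>V. \<exists>a. \<forall>p\<in>qball. f p = (\<Sum>i<d. qmul (fs i p) (a i))))"

end

theory Submission
  imports Defs "HOL-Computational_Algebra.Formal_Power_Series"
begin

(*
  Write a slice hyperholomorphic function on the ball as f(p) = sum_n p^n a_n and work with its
  coefficient sequence. Star-multiplication by B then becomes convolution T with the coefficients
  of B, and K_B(p, q) = <k_p, k_q> - <T* k_p, T* k_q> for the Szego kernel k_p = (conj p^n)_n.
  Since B_[c] = B_c * B_(conj c), B is a star-product of d elementary factors B_a. For a single
  factor, T_a is an isometry with T_a T_a* = I - u u*, where u is the normalized Szego kernel at a;
  telescoping over the factors gives I - T T* = sum_j w_j w_j* for an orthonormal family
  w_1, ..., w_d. Hence K_B(p, q) = sum_j w_j(p) conj (w_j(q)), and since the w_j are orthonormal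
  and a power series vanishing on (0, 1) is zero, the functions w_j are right linearly
  independent on the ball: they form a basis of the kernel span.
*)

unbundle no vec_syntax
unbundle fps_syntax

section \<open>Double series and real power series\<close>

lemma infsum_nat_eq_suminf:
  fixes f :: "nat \<Rightarrow> 'a::banach"
  assumes "summable (\<lambda>n. norm (f n))"
  shows "infsum f UNIV = suminf f"
  by (rule infsumI, rule norm_summable_imp_has_sum[OF assms])
    (rule summable_sums[OF summable_norm_cancel[OF assms]])

lemma infsum_antidiagonal:
  fixes F :: "nat \<times> nat \<Rightarrow> 'a::banach"
  assumes "F summable_on UNIV"
  shows "infsum F UNIV = (\<Sum>\<^sub>\<infinity>N. \<Sum>k\<le>N. F (N - k, k))"
proof -
  let ?S = "Sigma UNIV (\<lambda>N. {..N::nat})"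
  let ?G = "\<lambda>(N, k). F (N - k, k)"
  have bij: "bij_betw (\<lambda>(n, k). (n + k, k)) UNIV ?S"
    by (rule bij_betw_byWitness[where f' = "\<lambda>(N, k). (N - k, k)"]) auto
  have G: "(\<lambda>z. ?G ((\<lambda>(n, k). (n + k, k)) z)) = F"
    by auto
  have "?G summable_on ?S"
    using summable_on_reindex_bij_betw[OF bij, of ?G] assms by (simp only: G)
  then have "infsum ?G ?S = (\<Sum>\<^sub>\<infinity>N. \<Sum>\<^sub>\<infinity>k\<in>{..N}. F (N - k, k))"
    by (subst infsum_Sigma'_banach) auto
  moreover have "infsum F UNIV = infsum ?G ?S"
    using infsum_reindex_bij_betw[OF bij, of ?G] by (simp only: G)
  ultimately show ?thesis
    by simp
qed

lemma norm_coeff_le_if_real_powser_eq_0: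
  fixes z :: "nat \<Rightarrow> 'a::banach"
  assumes z: "summable (\<lambda>n. norm (z n))" and t: "0 < t" "t < 1"
    and sum_eq_0: "(\<Sum>n. t ^ n *\<^sub>R z n) = 0" and below: "\<And>i. i < n0 \<Longrightarrow> z i = 0"
  shows "norm (z n0) \<le> t * (\<Sum>m. norm (z (Suc m + n0)))"
proof -
  define g where "g m = z (m + n0)" for m
  have g: "summable (\<lambda>m. norm (g (Suc m)))"
    using summable_ignore_initial_segment[OF z, of "Suc n0"] by (simp add: g_def)
  have power_le: "t ^ Suc m \<le> t" for m
    using t by (simp add: mult_left_le_one_le power_le_one)
  have bound: "norm (t ^ Suc m *\<^sub>R g (Suc m)) \<le> t * norm (g (Suc m))" for m
    using t power_le[of m] by (simp add: abs_of_pos mult_right_mono del: power_Suc)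
  have summable_tail: "summable (\<lambda>m. norm (t ^ Suc m *\<^sub>R g (Suc m)))"
    by (rule summable_comparison_test'[OF summable_mult[OF g, of t]])
      (simp only: real_norm_def abs_norm_cancel bound)
  have "summable (\<lambda>n. t ^ n *\<^sub>R z n)"
  proof (rule summable_norm_cancel, rule summable_comparison_test'[OF z])
    show "norm (norm (t ^ n *\<^sub>R z n)) \<le> norm (z n)" for n
      using t by (simp add: abs_of_pos mult_left_le_one_le power_le_one)
  qed
  then have "(\<lambda>n. t ^ n *\<^sub>R z n) sums 0"
    using sum_eq_0 by (simp add: summable_sums_iff)
  then have "(\<lambda>m. t ^ (m + n0) *\<^sub>R g m) sums 0"
    using sums_zero_iff_shift[of n0 "\<lambda>n. t ^ n *\<^sub>R z n" 0] below by (simp add: g_def)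
  then have "(\<lambda>m. (1 / t ^ n0) *\<^sub>R (t ^ (m + n0) *\<^sub>R g m)) sums ((1 / t ^ n0) *\<^sub>R 0)"
    by (rule sums_scaleR_right)
  moreover have "(\<lambda>m. (1 / t ^ n0) *\<^sub>R (t ^ (m + n0) *\<^sub>R g m)) = (\<lambda>m. t ^ m *\<^sub>R g m)"
    using t by (simp add: power_add)
  ultimately have "(\<lambda>m. t ^ m *\<^sub>R g m) sums 0"
    by (simp only: scaleR_zero_right)
  then have "(\<lambda>m. t ^ Suc m *\<^sub>R g (Suc m)) sums (- g 0)"
    using sums_Suc_iff[of "\<lambda>m. t ^ m *\<^sub>R g m" "- g 0"] by simp
  then have "norm (z n0) = norm (\<Sum>m. t ^ Suc m *\<^sub>R g (Suc m))"
    by (simp add: g_def sums_iff)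
  also have "\<dots> \<le> (\<Sum>m. t * norm (g (Suc m)))"
    using summable_tail summable_mult[OF g] bound
    by (intro order_trans[OF summable_norm suminf_le]) auto
  also have "\<dots> = t * (\<Sum>m. norm (z (Suc m + n0)))"
    using suminf_mult[OF g, of t] by (simp add: g_def)
  finally show ?thesis .
qed

lemma coeffs_eq_0_if_real_powser_eq_0:
  fixes z :: "nat \<Rightarrow> 'a::banach"
  assumes z: "summable (\<lambda>n. norm (z n))"
    and sum_eq_0: "\<And>t. 0 < t \<Longrightarrow> t < 1 \<Longrightarrow> (\<Sum>n. t ^ n *\<^sub>R z n) = 0"
  shows "z n = 0"
proof (rule ccontr)
  assume "z n \<noteq> 0"
  define n0 where "n0 = (LEAST n. z n \<noteq> 0)"
  have "z n0 \<noteq> 0"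
    using LeastI[of "\<lambda>n. z n \<noteq> 0", OF \<open>z n \<noteq> 0\<close>] by (simp add: n0_def)
  then have z_n0: "0 < norm (z n0)"
    by simp
  define C where "C = (\<Sum>m. norm (z (Suc m + n0)))"
  have "0 \<le> C"
    using summable_ignore_initial_segment[OF z, of "Suc n0"]
    by (simp add: C_def suminf_nonneg add.commute)
  define t where "t = min (1 / 2) (norm (z n0) / (2 * (C + 1)))"
  have t: "0 < t" "t < 1"
    using z_n0 \<open>0 \<le> C\<close> by (simp_all add: t_def)
  have "norm (z n0) \<le> t * C"
    unfolding C_def
    by (rule norm_coeff_le_if_real_powser_eq_0[OF z t sum_eq_0[OF t]])
      (use not_less_Least in \<open>auto simp: n0_def\<close>)
  also have "\<dots> \<le> norm (z n0) / (2 * (C + 1)) * C"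
    using \<open>0 \<le> C\<close> by (intro mult_right_mono) (simp_all add: t_def)
  also have "\<dots> = norm (z n0) * (C / (2 * (C + 1)))"
    by simp
  also have "\<dots> < norm (z n0) * 1"
    using z_n0 \<open>0 \<le> C\<close> by (intro mult_strict_left_mono) simp_all
  finally show False
    by simp
qed

section \<open>Right spans over a division ring\<close>

lemma no_left_annihilator_after_elimination:
  fixes G :: "(nat \<Rightarrow> 'a::division_ring) set"
  assumes nondeg: "\<forall>c. (\<forall>g\<in>G. (\<Sum>j<Suc d. c j * g j) = 0) \<longrightarrow> (\<forall>j<Suc d. c j = 0)"
    and annihilates: "\<forall>g\<in>G. (\<Sum>j<d. c j * (g j - m j * g d)) = 0"
  shows "\<forall>j<d. c j = 0"
proof -
  define c' where "c' j = (if j < d then c j else - (\<Sum>i<d. c i * m i))" for j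
  have "(\<Sum>j<Suc d. c' j * g j) = (\<Sum>j<d. c j * (g j - m j * g d))" for g
    by (simp add: c'_def right_diff_distrib sum_subtractf sum_distrib_right mult.assoc)
  then have "\<forall>j<Suc d. c' j = 0"
    using annihilates nondeg by simp
  then show ?thesis
    by (metis c'_def less_SucI)
qed

lemma right_span_if_no_left_annihilator:
  fixes G :: "(nat \<Rightarrow> 'a::division_ring) set"
  assumes "\<forall>c. (\<forall>g\<in>G. (\<Sum>j<d. c j * g j) = 0) \<longrightarrow> (\<forall>j<d. c j = 0)"
  shows "\<exists>(N::nat) gs as. (\<forall>i<N. gs i \<in> G) \<and> (\<forall>j<d. v j = (\<Sum>i<N. gs i j * as i))"
  using assms
proof (induction d arbitrary: G v)
  case 0
  show ?case
    by (rule exI[of _ 0]) simp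
next
  case (Suc d)
  have "\<exists>g0\<in>G. g0 d \<noteq> 0"
  proof (rule ccontr)
    assume "\<not> (\<exists>g0\<in>G. g0 d \<noteq> 0)"
    define c :: "nat \<Rightarrow> 'a" where "c j = (if j = d then 1 else 0)" for j
    have "(\<Sum>j<Suc d. c j * g j) = g d" for g :: "nat \<Rightarrow> 'a"
      by (simp add: c_def)
    then have "\<forall>j<Suc d. c j = 0"
      using Suc.prems \<open>\<not> (\<exists>g0\<in>G. g0 d \<noteq> 0)\<close> by simp
    then have "c d = 0"
      by simp
    then show False
      by (simp add: c_def)
  qed
  then obtain g0 where "g0 \<in> G" and "g0 d \<noteq> 0"
    by blast
  define m where "m j = g0 j * inverse (g0 d)" for j
  define P where "P g = (\<lambda>j. g j - m j * g d)" for g :: "nat \<Rightarrow> 'a"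
  have "\<forall>c. (\<forall>g\<in>P ` G. (\<Sum>j<d. c j * g j) = 0) \<longrightarrow> (\<forall>j<d. c j = 0)"
  proof (rule allI, rule impI)
    fix c
    assume "\<forall>g\<in>P ` G. (\<Sum>j<d. c j * g j) = 0"
    then have "\<forall>g\<in>G. (\<Sum>j<d. c j * (g j - m j * g d)) = 0"
      by (simp add: P_def)
    then show "\<forall>j<d. c j = 0"
      by (rule no_left_annihilator_after_elimination[OF Suc.prems])
  qed
  then obtain N :: nat and gs' as where "\<forall>i<N. gs' i \<in> P ` G"
    and P_v: "\<forall>j<d. P v j = (\<Sum>i<N. gs' i j * as i)"
    using Suc.IH[where G = "P ` G" and v = "P v"] by blast
  then have "\<forall>i. \<exists>g. i < N \<longrightarrow> g \<in> G \<and> gs' i = P g"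
    by blast
  then obtain gs where gs: "\<forall>i<N. gs i \<in> G \<and> gs' i = P (gs i)"
    by metis
  define S where "S j = (\<Sum>i<N. gs i j * as i)" for j
  have S: "(\<Sum>i<Suc N. (gs(N := g0)) i j * (as(N := inverse (g0 d) * (v d - S d))) i) =
      S j + m j * (v d - S d)" for j
    by (simp add: S_def m_def mult.assoc)
  have v: "v j = S j + m j * (v d - S d)" if "j < Suc d" for j
  proof (cases "j = d")
    case True
    then show ?thesis
      using \<open>g0 d \<noteq> 0\<close> by (simp add: m_def)
  next
    case False
    with that have "P v j = (\<Sum>i<N. gs' i j * as i)"
      using P_v by simp
    also have "\<dots> = (\<Sum>i<N. (gs i j - m j * gs i d) * as i)"
      using gs by (intro sum.cong) (simp_all add: P_def)
    also have "\<dots> = S j - m j * S d"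
      by (simp add: S_def left_diff_distrib sum_subtractf sum_distrib_left mult.assoc)
    finally show ?thesis
      by (simp add: P_def algebra_simps)
  qed
  show ?case
  proof (intro exI conjI)
    show "\<forall>i<Suc N. (gs(N := g0)) i \<in> G"
      using gs \<open>g0 \<in> G\<close> by (simp add: less_Suc_eq)
    show "\<forall>j<Suc d. v j =
        (\<Sum>i<Suc N. (gs(N := g0)) i j * (as(N := inverse (g0 d) * (v d - S d))) i)"
      unfolding S using v by blast
  qed
qed

section \<open>The quaternions\<close>

lemma qmul_assoc: "qmul (qmul x y) z = qmul x (qmul y z)"
  by (simp add: qmul_def prod_eq_iff algebra_simps)

lemma qmul_scaleR_left: "qmul (r *\<^sub>R x) y = r *\<^sub>R qmul x y"
  and qmul_scaleR_right: "qmul x (r *\<^sub>R y) = r *\<^sub>R qmul x y"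
  by (simp_all add: qmul_def prod_eq_iff algebra_simps scaleR_conv_of_real)

lemma qmul_qcnj: "qmul x (qcnj x) = (complex_of_real ((norm x)\<^sup>2), 0)"
  and qcnj_qmul: "qmul (qcnj x) x = (complex_of_real ((norm x)\<^sup>2), 0)"
proof -
  obtain z w where x: "x = (z, w)" by (cases x)
  have "z * cnj z + w * cnj w = complex_of_real ((norm x)\<^sup>2)"
    by (simp only: x norm_Pair of_real_add complex_norm_square real_sqrt_pow2 sum_power2_ge_zero)
  then show "qmul x (qcnj x) = (complex_of_real ((norm x)\<^sup>2), 0)"
    and "qmul (qcnj x) x = (complex_of_real ((norm x)\<^sup>2), 0)"
    by (simp_all add: x qmul_def qcnj_def mult.commute del: of_real_power)
qed

lemma norm_qmul: "norm (qmul x y) = norm x * norm y"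
proof -
  have sq: "(norm (z::quat))\<^sup>2 =
      (Re (fst z))\<^sup>2 + (Im (fst z))\<^sup>2 + (Re (snd z))\<^sup>2 + (Im (snd z))\<^sup>2" for z
    by (cases z) (simp add: norm_Pair cmod_power2)
  have "(norm (qmul x y))\<^sup>2 = (norm x * norm y)\<^sup>2"
    unfolding power_mult_distrib sq by (simp add: qmul_def power2_eq_square algebra_simps)
  then show ?thesis by (simp add: power2_eq_iff_nonneg)
qed

(* A copy of quat on which qmul becomes the multiplication of a real normed division algebra. *)
typedef quaternion = "UNIV :: quat set"
  by simp

lemma quaternion_eq_iff: "x = y \<longleftrightarrow> Rep_quaternion x = Rep_quaternion y"
  by (simp add: Rep_quaternion_inject)

instantiation quaternion :: real_div_algebra
begin

definition "0 = Abs_quaternion 0"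
definition "1 = Abs_quaternion (qreal 1)"
definition "x + y = Abs_quaternion (Rep_quaternion x + Rep_quaternion y)"
definition "x - y = Abs_quaternion (Rep_quaternion x - Rep_quaternion y)"
definition "- x = Abs_quaternion (- Rep_quaternion x)"
definition "x * y = Abs_quaternion (qmul (Rep_quaternion x) (Rep_quaternion y))"
definition "inverse x = Abs_quaternion ((1 / (norm (Rep_quaternion x))\<^sup>2) *\<^sub>R qcnj (Rep_quaternion x))"
definition "x div (y::quaternion) = x * inverse y"
definition "scaleR r x = Abs_quaternion (r *\<^sub>R Rep_quaternion x)"

lemma Rep_quaternion_simps [simp]:
  "Rep_quaternion 0 = 0"
  "Rep_quaternion 1 = qreal 1"
  "Rep_quaternion (x + y) = Rep_quaternion x + Rep_quaternion y"
  "Rep_quaternion (x - y) = Rep_quaternion x - Rep_quaternion y"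
  "Rep_quaternion (- x) = - Rep_quaternion x"
  "Rep_quaternion (x * y) = qmul (Rep_quaternion x) (Rep_quaternion y)"
  "Rep_quaternion (inverse x) = (1 / (norm (Rep_quaternion x))\<^sup>2) *\<^sub>R qcnj (Rep_quaternion x)"
  "Rep_quaternion (r *\<^sub>R x) = r *\<^sub>R Rep_quaternion x"
  by (simp_all add: zero_quaternion_def one_quaternion_def plus_quaternion_def minus_quaternion_def
      uminus_quaternion_def times_quaternion_def inverse_quaternion_def scaleR_quaternion_def
      Abs_quaternion_inverse)

instance
proof
  fix x y z :: quaternion and a b :: real
  show "x + y + z = x + (y + z)" "x + y = y + x" "0 + x = x" "- x + x = 0" "x - y = x + - y"
    "a *\<^sub>R (x + y) = a *\<^sub>R x + a *\<^sub>R y" "(a + b) *\<^sub>R x = a *\<^sub>R x + b *\<^sub>R x"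
    "a *\<^sub>R b *\<^sub>R x = (a * b) *\<^sub>R x" "1 *\<^sub>R x = x"
    by (simp_all add: quaternion_eq_iff scaleR_right_distrib scaleR_left_distrib)
  show "x * y * z = x * (y * z)" by (simp add: quaternion_eq_iff qmul_assoc)
  show "(x + y) * z = x * z + y * z" "x * (y + z) = x * y + x * z"
    "1 * x = x" "x * 1 = x"
    by (simp_all add: quaternion_eq_iff qmul_def qreal_def prod_eq_iff algebra_simps)
  show "a *\<^sub>R x * y = a *\<^sub>R (x * y)" "x * a *\<^sub>R y = a *\<^sub>R (x * y)"
    by (simp_all add: quaternion_eq_iff qmul_scaleR_left qmul_scaleR_right)
  show "(0::quaternion) \<noteq> 1" by (simp add: quaternion_eq_iff qreal_def zero_prod_def)
  show "x div y = x * inverse y" by (simp add: divide_quaternion_def)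
  show "inverse (0::quaternion) = 0" by (simp add: quaternion_eq_iff qcnj_def zero_prod_def)
  assume "x \<noteq> 0"
  then have "norm (Rep_quaternion x) \<noteq> 0" by (simp add: quaternion_eq_iff)
  then show "inverse x * x = 1" "x * inverse x = 1"
    by (simp_all add: quaternion_eq_iff qmul_scaleR_left qmul_scaleR_right qmul_qcnj qcnj_qmul
        qreal_def scaleR_conv_of_real)
qed

end

instantiation quaternion :: real_normed_div_algebra
begin

definition "norm x = norm (Rep_quaternion x)"
definition "sgn (x::quaternion) = x /\<^sub>R norm x"
definition "dist (x::quaternion) y = norm (x - y)"
definition "(uniformity :: (quaternion \<times> quaternion) filter) =
  (INF e\<in>{0 <..}. principal {(x, y). dist x y < e})"
definition "open (U :: quaternion set) \<longleftrightarrow>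
  (\<forall>x\<in>U. eventually (\<lambda>(x', y). x' = x \<longrightarrow> y \<in> U) uniformity)"

instance
proof
  fix x y :: quaternion and a :: real and S :: "quaternion set"
  show "sgn x = x /\<^sub>R norm x" "dist x y = norm (x - y)"
    "uniformity = (INF e\<in>{0<..}. principal {(x, y::quaternion). dist x y < e})"
    "open S = (\<forall>x\<in>S. \<forall>\<^sub>F (x', y) in uniformity. x' = x \<longrightarrow> y \<in> S)"
    by (simp_all add: sgn_quaternion_def dist_quaternion_def uniformity_quaternion_def
        open_quaternion_def)
  show "(norm x = 0) = (x = 0)" "norm (x + y) \<le> norm x + norm y" "norm (a *\<^sub>R x) = \<bar>a\<bar> * norm x"
    "norm (x * y) = norm x * norm y"
    by (simp_all add: norm_quaternion_def quaternion_eq_iff norm_triangle_ineq norm_qmul)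
qed

end

instance quaternion :: banach
proof
  fix X :: "nat \<Rightarrow> quaternion"
  have dist_Rep: "dist x y = dist (Rep_quaternion x) (Rep_quaternion y)" for x y
    by (simp add: dist_quaternion_def norm_quaternion_def dist_norm)
  assume "Cauchy X"
  then have "Cauchy (\<lambda>n. Rep_quaternion (X n))" by (simp add: Cauchy_def dist_Rep)
  then obtain L where "(\<lambda>n. Rep_quaternion (X n)) \<longlonglongrightarrow> L"
    using Cauchy_convergent_iff convergent_def by blast
  then have "X \<longlonglongrightarrow> Abs_quaternion L"
    unfolding lim_sequentially dist_Rep by (simp add: Abs_quaternion_inverse)
  then show "convergent X" by (auto simp: convergent_def)
qed

definition hcnj :: "quaternion \<Rightarrow> quaternion" where
  "hcnj x = Abs_quaternion (qcnj (Rep_quaternion x))"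

lemma Rep_quaternion_hcnj [simp]: "Rep_quaternion (hcnj x) = qcnj (Rep_quaternion x)"
  by (simp add: hcnj_def Abs_quaternion_inverse)

lemma Rep_quaternion_of_real [simp]: "Rep_quaternion (of_real r) = qreal r"
  by (simp add: of_real_def qreal_def)

lemma hcnj_mult: "hcnj (x * y) = hcnj y * hcnj x"
  by (simp add: quaternion_eq_iff qmul_def qcnj_def algebra_simps)

lemma hcnj_add [simp]: "hcnj (x + y) = hcnj x + hcnj y"
  and hcnj_diff [simp]: "hcnj (x - y) = hcnj x - hcnj y"
  and hcnj_minus [simp]: "hcnj (- x) = - hcnj x"
  and hcnj_hcnj [simp]: "hcnj (hcnj x) = x"
  and hcnj_of_real [simp]: "hcnj (of_real r) = of_real r"
  and hcnj_scaleR [simp]: "hcnj (r *\<^sub>R x) = r *\<^sub>R hcnj x"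
  by (simp_all add: quaternion_eq_iff qcnj_def qreal_def)

lemma hcnj_zero [simp]: "hcnj 0 = 0"
  and hcnj_one [simp]: "hcnj 1 = 1"
  using hcnj_of_real[of 0] hcnj_of_real[of 1] by simp_all

lemma norm_hcnj [simp]: "norm (hcnj x) = norm x"
  by (cases "Rep_quaternion x") (simp add: norm_quaternion_def qcnj_def norm_Pair)

lemma hcnj_eq_0_iff [simp]: "hcnj x = 0 \<longleftrightarrow> x = 0"
  by (metis hcnj_hcnj hcnj_zero)

lemma hcnj_power: "hcnj (x ^ n) = hcnj x ^ n"
  by (induction n) (simp_all add: hcnj_mult power_commutes)

lemma hcnj_sum: "hcnj (sum f A) = (\<Sum>i\<in>A. hcnj (f i))"
  by (induction A rule: infinite_finite_induct) auto

lemma bounded_linear_hcnj: "bounded_linear hcnj"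
  by (rule bounded_linear_intro[where K=1]) simp_all

lemma hcnj_suminf: "summable f \<Longrightarrow> hcnj (suminf f) = (\<Sum>n. hcnj (f n))"
  by (rule bounded_linear.suminf[OF bounded_linear_hcnj])

lemma mult_hcnj: "x * hcnj x = (norm x)\<^sup>2 *\<^sub>R 1"
  and hcnj_mult_self: "hcnj x * x = (norm x)\<^sup>2 *\<^sub>R 1"
  by (simp_all add: quaternion_eq_iff qmul_qcnj qcnj_qmul norm_quaternion_def qreal_def
      scaleR_conv_of_real del: of_real_power)

lemma add_hcnj: "x + hcnj x = of_real (2 * qre (Rep_quaternion x))"
  by (cases "Rep_quaternion x") 
    (simp add: quaternion_eq_iff qcnj_def qre_def qreal_def complex_add_cnj del: of_real_mult)

lemma Abs_quaternion_simps:
  "Abs_quaternion 0 = 0"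
  "Abs_quaternion (x + y) = Abs_quaternion x + Abs_quaternion y"
  "Abs_quaternion (- x) = - Abs_quaternion x"
  "Abs_quaternion (qmul x y) = Abs_quaternion x * Abs_quaternion y"
  "Abs_quaternion (qreal r) = of_real r"
  "Abs_quaternion (qcnj x) = hcnj (Abs_quaternion x)"
  "Abs_quaternion (r *\<^sub>R x) = r *\<^sub>R Abs_quaternion x"
  "norm (Abs_quaternion x) = norm x"
  by (simp_all add: quaternion_eq_iff Abs_quaternion_inverse norm_quaternion_def)

lemma Abs_quaternion_eq_0_iff: "Abs_quaternion x = 0 \<longleftrightarrow> x = 0"
  by (simp add: quaternion_eq_iff Abs_quaternion_inverse)

lemma Abs_quaternion_sum: "Abs_quaternion (sum f A) = (\<Sum>i\<in>A. Abs_quaternion (f i))"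
  by (induction A rule: infinite_finite_induct) (simp_all add: Abs_quaternion_simps)

lemma Rep_quaternion_sum: "Rep_quaternion (sum f A) = (\<Sum>i\<in>A. Rep_quaternion (f i))"
  by (induction A rule: infinite_finite_induct) auto

lemma Rep_quaternion_power: "Rep_quaternion (x ^ n) = qpow (Rep_quaternion x) n"
  by (induction n) simp_all

lemma Rep_quaternion_suminf:
  "summable f \<Longrightarrow> Rep_quaternion (suminf f) = (\<Sum>n. Rep_quaternion (f n))"
  by (rule bounded_linear.suminf)
    (rule bounded_linear_intro[where K=1], simp_all add: norm_quaternion_def)

section \<open>Blaschke factors as formal power series\<close>

definition to_fps :: "(nat \<Rightarrow> quat) \<Rightarrow> quaternion fps" where
  "to_fps s = Abs_fps (\<lambda>n. Abs_quaternion (s n))"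

lemma to_fps_nth [simp]: "to_fps s $ n = Abs_quaternion (s n)"
  by (simp add: to_fps_def)

lemma to_fps_inject: "to_fps a = to_fps b \<Longrightarrow> a = b"
  by (auto simp: fps_eq_iff Abs_quaternion_inject)

lemma to_fps_cstar: "to_fps (cstar a b) = to_fps a * to_fps b"
  by (rule fps_ext)
    (simp add: cstar_def fps_mult_nth Abs_quaternion_sum Abs_quaternion_simps atLeast0AtMost)

lemma to_fps_qunit: "to_fps qunit = 1"
  by (rule fps_ext) (simp add: qunit_def Abs_quaternion_simps)

lemma to_fps_cpow: "to_fps (cpow a m) = to_fps a ^ m"
  by (induction m) (simp_all add: to_fps_qunit to_fps_cstar)

lemma to_fps_cscal: "to_fps (cscal a c) = to_fps a * fps_const (Abs_quaternion c)"
  by (rule fps_ext) (simp add: cscal_def Abs_quaternion_simps)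

lemma to_fps_sinv:
  assumes "to_fps a * G = 1" "G * to_fps a = 1"
  shows "to_fps (sinv a) = G"
proof -
  define g where "g n = Rep_quaternion (G $ n)" for n
  have to_fps_g: "to_fps g = G"
    by (rule fps_ext) (simp add: g_def Rep_quaternion_inverse)
  have "sinv a = g"
    unfolding sinv_def
  proof (rule the_equality)
    show "cstar a g = qunit \<and> cstar g a = qunit"
      by (intro conjI; rule to_fps_inject) (simp_all add: to_fps_cstar to_fps_qunit to_fps_g assms)
    fix c assume "cstar a c = qunit \<and> cstar c a = qunit"
    then have "to_fps c * to_fps a = 1"
      by (metis to_fps_cstar to_fps_qunit)
    then have "to_fps c = G"
      by (metis assms(1) mult.assoc mult_1_left mult_1_right)
    then show "c = g"
      using to_fps_g by (auto intro: to_fps_inject)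
  qed
  then show ?thesis
    using to_fps_g by simp
qed

lemma to_fps_cpoly2:
  "to_fps (cpoly [x, y]) = fps_const (Abs_quaternion x) + fps_X * fps_const (Abs_quaternion y)"
  by (rule fps_ext) (auto simp: cpoly_def Abs_quaternion_simps less_Suc_eq split: nat.splits)

lemma to_fps_cpoly3:
  "to_fps (cpoly [x, y, z]) = fps_const (Abs_quaternion x) + fps_X * fps_const (Abs_quaternion y)
    + fps_X\<^sup>2 * fps_const (Abs_quaternion z)"
  by (rule fps_ext)
    (auto simp: cpoly_def Abs_quaternion_simps less_Suc_eq fps_X_power_mult_nth split: nat.splits)

definition fps_geometric :: "'a::ring_1 \<Rightarrow> 'a fps" where
  "fps_geometric t = Abs_fps (\<lambda>n. t ^ n)"

lemma fps_geometric_nth [simp]: "fps_geometric t $ n = t ^ n"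
  by (simp add: fps_geometric_def)

lemma one_minus_X_mult_fps_geometric: "(1 - fps_X * fps_const t) * fps_geometric t = 1"
proof (rule fps_ext)
  fix n
  show "((1 - fps_X * fps_const t) * fps_geometric t) $ n = 1 $ n"
    by (cases n) (simp_all add: ring_distribs mult.assoc)
qed

lemma fps_geometric_mult_one_minus_X: "fps_geometric t * (1 - fps_X * fps_const t) = 1"
proof (rule fps_ext)
  fix n
  show "(fps_geometric t * (1 - fps_X * fps_const t)) $ n = 1 $ n"
    by (cases n) (simp_all add: ring_distribs fps_mult_fps_X_commute mult.assoc[symmetric] power_commutes)
qed

lemma fps_X_const_mult_X_const:
  fixes s t :: "'a::ring_1"
  shows "fps_X * fps_const s * (fps_X * fps_const t) = fps_X\<^sup>2 * fps_const (s * t)"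
proof -
  have "fps_X * fps_const s * (fps_X * fps_const t) = fps_X * (fps_const s * fps_X) * fps_const t"
    by (simp only: mult.assoc)
  also have "\<dots> = fps_X * (fps_X * fps_const s) * fps_const t"
    by (simp only: fps_mult_fps_X_commute[of "fps_const s"])
  also have "\<dots> = fps_X\<^sup>2 * fps_const (s * t)"
    by (simp only: power2_eq_square mult.assoc fps_const_mult)
  finally show ?thesis .
qed

lemma one_minus_X_const_mult:
  fixes s t :: "'a::ring_1"
  shows "(1 - fps_X * fps_const s) * (1 - fps_X * fps_const t) =
    1 + fps_X * fps_const (- (s + t)) + fps_X\<^sup>2 * fps_const (s * t)"
  using fps_X_const_mult_X_const[of s t]
  by (simp add: ring_distribs flip: fps_const_add fps_const_neg fps_const_sub)

lemma const_minus_X_mult: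
  fixes s t :: "'a::ring_1"
  shows "(fps_const s - fps_X) * (fps_const t - fps_X) =
    fps_const (s * t) + fps_X * fps_const (- (s + t)) + fps_X\<^sup>2"
  by (simp add: ring_distribs fps_mult_fps_X_commute[of "fps_const s"] power2_eq_square
      flip: fps_const_add fps_const_neg fps_const_sub)

definition blaschke_coeff :: "quaternion \<Rightarrow> nat \<Rightarrow> quaternion" where
  "blaschke_coeff a n =
     (if n = 0 then norm a *\<^sub>R 1 else (- ((1 - (norm a)\<^sup>2) / norm a)) *\<^sub>R hcnj a ^ n)"

definition blaschke_fps :: "quaternion \<Rightarrow> quaternion fps" where
  "blaschke_fps a = Abs_fps (blaschke_coeff a)"

lemma blaschke_fps_eq:
  assumes "a \<noteq> 0"
  shows "blaschke_fps a =
    fps_geometric (hcnj a) * (fps_const a - fps_X) * fps_const ((1 / norm a) *\<^sub>R hcnj a)"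
proof (rule fps_ext)
  fix n
  let ?t = "hcnj a"
  have "(fps_geometric ?t * (fps_const a - fps_X) * fps_const ((1 / norm a) *\<^sub>R ?t)) $ n
      = (1 / norm a) *\<^sub>R ((?t ^ n * a - (fps_geometric ?t * fps_X) $ n) * ?t)"
    by (simp add: ring_distribs scaleR_diff_right)
  also have "\<dots> = blaschke_coeff a n"
  proof (cases n)
    case 0
    then show ?thesis
      using assms by (simp add: blaschke_coeff_def mult_hcnj power2_eq_square of_real_def)
  next
    case (Suc m)
    have "(?t ^ n * a - (fps_geometric ?t * fps_X) $ n) * ?t = ?t ^ n * (a * ?t) - ?t ^ m * ?t"
      using Suc by (simp add: left_diff_distrib mult.assoc)
    also have "\<dots> = ((norm a)\<^sup>2 - 1) *\<^sub>R ?t ^ n"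
      using Suc by (simp add: mult_hcnj of_real_def power_commutes scaleR_diff_left)
    finally have "(1 / norm a) *\<^sub>R ((?t ^ n * a - (fps_geometric ?t * fps_X) $ n) * ?t)
        = ((1 / norm a) * ((norm a)\<^sup>2 - 1)) *\<^sub>R ?t ^ n"
      by simp
    also have "(1 / norm a) * ((norm a)\<^sup>2 - 1) = - ((1 - (norm a)\<^sup>2) / norm a)"
      using assms by (simp add: field_simps)
    finally show ?thesis
      using Suc by (simp add: blaschke_coeff_def)
  qed
  finally show "blaschke_fps a $ n = (fps_geometric ?t * (fps_const a - fps_X) *
      fps_const ((1 / norm a) *\<^sub>R ?t)) $ n"
    by (simp add: blaschke_fps_def)
qed

lemma to_fps_blaschke:
  assumes "a \<noteq> 0"
  shows "to_fps (blaschke a) = blaschke_fps (Abs_quaternion a)"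
proof -
  let ?t = "hcnj (Abs_quaternion a)"
  have "to_fps (cpoly [qreal 1, - qcnj a]) = 1 - fps_X * fps_const ?t"
    by (simp add: to_fps_cpoly2 Abs_quaternion_simps flip: fps_const_neg)
  then have "to_fps (sinv (cpoly [qreal 1, - qcnj a])) = fps_geometric ?t"
    by (intro to_fps_sinv)
      (simp_all add: one_minus_X_mult_fps_geometric fps_geometric_mult_one_minus_X)
  moreover have "to_fps (cpoly [a, - qreal 1]) = fps_const (Abs_quaternion a) - fps_X"
    by (simp add: to_fps_cpoly2 Abs_quaternion_simps flip: fps_const_neg)
  moreover have "Abs_quaternion a \<noteq> 0"
    using assms by (simp add: Abs_quaternion_eq_0_iff)
  ultimately show ?thesis
    unfolding blaschke_def to_fps_cscal to_fps_cstar
    by (simp add: blaschke_fps_eq Abs_quaternion_simps)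
qed

definition slice :: "quaternion \<Rightarrow> quaternion set" where
  "slice c = {\<alpha> *\<^sub>R 1 + \<beta> *\<^sub>R c | \<alpha> \<beta>. True}"

lemma hcnj_eq_re: "hcnj c = (2 * qre (Rep_quaternion c)) *\<^sub>R 1 - c"
  using add_hcnj[of c] by (simp add: of_real_def algebra_simps)

lemma mult_self_eq_re: "c * c = (2 * qre (Rep_quaternion c)) *\<^sub>R c - (norm c)\<^sup>2 *\<^sub>R 1"
  using mult_hcnj[of c] by (simp add: hcnj_eq_re of_real_def algebra_simps)

lemma slice_scaleR_one_add [simp]: "\<alpha> *\<^sub>R 1 + \<beta> *\<^sub>R c \<in> slice c"
  by (auto simp: slice_def)

lemma sliceE:
  assumes "x \<in> slice c"
  obtains \<alpha> \<beta> where "x = \<alpha> *\<^sub>R 1 + \<beta> *\<^sub>R c"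
  using assms by (auto simp: slice_def)

lemma slice_zero [simp]: "0 \<in> slice c"
  and slice_one [simp]: "1 \<in> slice c"
  and slice_self [simp]: "c \<in> slice c"
  using slice_scaleR_one_add[of 0 0 c] slice_scaleR_one_add[of 1 0 c]
    slice_scaleR_one_add[of 0 1 c] by simp_all

lemma slice_diff [simp]: "x \<in> slice c \<Longrightarrow> y \<in> slice c \<Longrightarrow> x - y \<in> slice c"
  by (elim sliceE) (metis slice_scaleR_one_add add_diff_add scaleR_diff_left)

lemma slice_scaleR [simp]: "x \<in> slice c \<Longrightarrow> r *\<^sub>R x \<in> slice c"
  by (elim sliceE) (metis slice_scaleR_one_add scaleR_add_right scaleR_scaleR)

lemma slice_mult [simp]:
  assumes "x \<in> slice c" "y \<in> slice c"
  shows "x * y \<in> slice c"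
proof -
  obtain a b a' b' where "x = a *\<^sub>R 1 + b *\<^sub>R c" "y = a' *\<^sub>R 1 + b' *\<^sub>R c"
    using assms by (elim sliceE)
  then have "x * y = (a * a' - b * b' * (norm c)\<^sup>2) *\<^sub>R 1
      + (a * b' + b * a' + b * b' * (2 * qre (Rep_quaternion c))) *\<^sub>R c"
    by (simp add: algebra_simps mult_self_eq_re)
  then show ?thesis
    by simp
qed

lemma slice_hcnj [simp]: "x \<in> slice c \<Longrightarrow> hcnj x \<in> slice c"
  by (elim sliceE) (simp add: hcnj_eq_re)

lemma slice_power [simp]: "x \<in> slice c \<Longrightarrow> x ^ n \<in> slice c"
  by (induction n) simp_all

lemma slice_commute: "x \<in> slice c \<Longrightarrow> y \<in> slice c \<Longrightarrow> x * y = y * x"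
  by (elim sliceE) (simp add: algebra_simps)

lemma fps_mult_commute_coeffs:
  fixes f g :: "'a::semiring_0 fps"
  assumes "\<And>i j. f $ i * g $ j = g $ j * f $ i"
  shows "f * g = g * f"
proof (rule fps_ext)
  fix n
  have "(\<Sum>i=0..n. f $ i * g $ (n - i)) = (\<Sum>i=0..n. f $ (n - i) * g $ i)"
    by (rule fps_mult_commute_lemma)
  then show "(f * g) $ n = (g * f) $ n"
    by (simp add: fps_mult_nth assms)
qed

lemma fps_mult_commute_slice:
  assumes "\<And>n. f $ n \<in> slice c" "\<And>n. g $ n \<in> slice c"
  shows "f * g = g * f"
  by (rule fps_mult_commute_coeffs) (rule slice_commute[OF assms])

lemma blaschke_fps_mult_hcnj:
  assumes "c \<noteq> 0"
  shows "blaschke_fps c * blaschke_fps (hcnj c) =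
    fps_geometric c * fps_geometric (hcnj c) * ((fps_const c - fps_X) * (fps_const (hcnj c) - fps_X))"
proof -
  define A where "A = fps_geometric (hcnj c)"
  define B where "B = fps_const c - fps_X"
  define K where "K = fps_const ((1 / norm c) *\<^sub>R hcnj c)"
  define C where "C = fps_geometric c"
  define D where "D = fps_const (hcnj c) - fps_X"
  have "K * fps_const ((1 / norm c) *\<^sub>R c) = 1"
    using assms by (simp add: K_def hcnj_mult_self of_real_def power2_eq_square)
  then have K_inverse: "K * fps_const ((1 / norm (hcnj c)) *\<^sub>R hcnj (hcnj c)) = 1"
    by simp
  \<comment> \<open>All factors have coefficients in the commutative slice through c.\<close>
  have "A $ n \<in> slice c" "B $ n \<in> slice c" "K $ n \<in> slice c" "C $ n \<in> slice c"
    "D $ n \<in> slice c" for n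
    by (simp_all add: A_def B_def K_def C_def D_def)
  then have KC: "K * C = C * K" and KD: "K * D = D * K" and BC: "B * C = C * B"
    and AC: "A * C = C * A"
    by (blast intro: fps_mult_commute_slice)+
  have "blaschke_fps c * blaschke_fps (hcnj c)
      = A * B * K * (C * D * fps_const ((1 / norm (hcnj c)) *\<^sub>R hcnj (hcnj c)))"
    using assms by (simp add: blaschke_fps_eq A_def B_def K_def C_def D_def)
  also have "\<dots> = A * B * (K * C) * D * fps_const ((1 / norm (hcnj c)) *\<^sub>R hcnj (hcnj c))"
    by (simp only: mult.assoc)
  also have "\<dots> = A * (B * C) * (K * D) * fps_const ((1 / norm (hcnj c)) *\<^sub>R hcnj (hcnj c))"
    by (simp only: KC mult.assoc)
  also have "\<dots> = A * (C * B) * D"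
    by (simp only: KD BC mult.assoc K_inverse mult_1_right)
  also have "\<dots> = C * A * (B * D)"
    by (simp only: AC mult.assoc[symmetric])
  finally show ?thesis
    by (simp add: A_def B_def C_def D_def)
qed

lemma to_fps_blaschke_sph:
  assumes "c \<noteq> 0"
  shows "to_fps (blaschke_sph c) =
    blaschke_fps (Abs_quaternion c) * blaschke_fps (hcnj (Abs_quaternion c))"
proof -
  define a where "a = Abs_quaternion c"
  define t where "t = hcnj a"
  have a0: "a \<noteq> 0"
    using assms by (simp add: a_def Abs_quaternion_eq_0_iff)
  have sum: "- (t + a) = of_real (- 2 * qre c)" "- (a + t) = of_real (- 2 * qre c)"
    using add_hcnj[of a] by (simp_all add: t_def a_def Abs_quaternion_inverse add.commute)
  have prod: "t * a = of_real ((norm c)\<^sup>2)" "a * t = of_real ((norm c)\<^sup>2)"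
    by (simp_all add: t_def a_def hcnj_mult_self mult_hcnj Abs_quaternion_simps of_real_def)
  let ?den = "cpoly [qreal 1, qreal (- 2 * qre c), qreal ((norm c)\<^sup>2)]"
  let ?num = "cpoly [qreal ((norm c)\<^sup>2), qreal (- 2 * qre c), qreal 1]"
  have den: "to_fps ?den = (1 - fps_X * fps_const t) * (1 - fps_X * fps_const a)"
    unfolding one_minus_X_const_mult to_fps_cpoly3 sum prod by (simp add: Abs_quaternion_simps)
  have inv: "to_fps (sinv ?den) = fps_geometric a * fps_geometric t"
  proof (rule to_fps_sinv)
    show "to_fps ?den * (fps_geometric a * fps_geometric t) = 1"
      unfolding den
      by (simp add: mult.assoc one_minus_X_mult_fps_geometric
          flip: mult.assoc[of "1 - fps_X * fps_const a"])
    show "fps_geometric a * fps_geometric t * to_fps ?den = 1"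
      unfolding den
      by (simp add: mult.assoc fps_geometric_mult_one_minus_X
          flip: mult.assoc[of "fps_geometric t"])
  qed
  have num: "to_fps ?num = (fps_const a - fps_X) * (fps_const t - fps_X)"
    unfolding const_minus_X_mult to_fps_cpoly3 sum prod by (simp add: Abs_quaternion_simps)
  show ?thesis
    unfolding blaschke_sph_def to_fps_cstar inv num a_def[symmetric] t_def[symmetric]
    using blaschke_fps_mult_hcnj[OF a0, folded t_def] by simp
qed

definition blaschke_zeros :: "(quat \<times> nat) list \<Rightarrow> quat list list \<Rightarrow> quaternion list" where
  "blaschke_zeros cms als =
     concat (map (\<lambda>(c, m). concat (replicate m [Abs_quaternion c, hcnj (Abs_quaternion c)])) cms)
     @ map Abs_quaternion (concat als)"

lemma to_fps_blaschke_prod: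
  assumes "\<forall>cm\<in>set cms. fst cm \<noteq> 0" and "\<forall>al\<in>set als. \<forall>a\<in>set al. a \<noteq> 0"
  shows "to_fps (blaschke_prod cms als) = prod_list (map blaschke_fps (blaschke_zeros cms als))"
proof -
  have "to_fps (foldr (\<lambda>(c, m) acc. cstar (cpow (blaschke_sph c) m) acc) cms qunit) =
      prod_list (map blaschke_fps
        (concat (map (\<lambda>(c, m). concat (replicate m [Abs_quaternion c, hcnj (Abs_quaternion c)])) cms)))"
    using assms(1)
  proof (induction cms)
    case (Cons cm cms)
    have "prod_list (map blaschke_fps (concat (replicate m [x, y]))) =
        (blaschke_fps x * blaschke_fps y) ^ m" for m x y
      by (induction m) (simp_all add: mult.assoc)
    with Cons show ?case
      by (cases cm) (simp add: to_fps_cstar to_fps_cpow to_fps_blaschke_sph)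
  qed (simp add: to_fps_qunit)
  moreover have "to_fps (foldr (\<lambda>a acc. cstar (blaschke a) acc) xs qunit) =
      prod_list (map blaschke_fps (map Abs_quaternion xs))" if "\<forall>a\<in>set xs. a \<noteq> 0" for xs
    using that by (induction xs) (simp_all add: to_fps_qunit to_fps_cstar to_fps_blaschke)
  ultimately show ?thesis
    using assms(2) by (simp add: blaschke_prod_def blaschke_zeros_def to_fps_cstar)
qed

lemma length_blaschke_zeros: "length (blaschke_zeros cms als) = blaschke_degree cms als"
proof -
  have "length (concat (map (\<lambda>(c, m). concat (replicate m [x c, y c])) cms)) =
      (\<Sum>cm\<leftarrow>cms. 2 * snd cm)" for x y :: "quat \<Rightarrow> quaternion"
    by (induction cms) (auto simp: length_concat sum_list_replicate)
  then show ?thesis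
    by (simp add: blaschke_zeros_def blaschke_degree_def length_concat)
qed

lemma blaschke_zeros_in_ball:
  assumes "\<forall>cm\<in>set cms. fst cm \<in> qball - {0}" and "\<forall>al\<in>set als. \<forall>a\<in>set al. a \<in> qball - {0}"
  shows "set (blaschke_zeros cms als) \<subseteq> ball 0 1 - {0}"
  using assms
  by (auto simp: blaschke_zeros_def qball_def Abs_quaternion_simps Abs_quaternion_eq_0_iff)

section \<open>Convolution and its adjoint on summable sequences\<close>

definition l1 :: "(nat \<Rightarrow> 'a::real_normed_vector) \<Rightarrow> bool" where
  "l1 x \<longleftrightarrow> summable (\<lambda>n. norm (x n))"

definition l1_norm :: "(nat \<Rightarrow> 'a::real_normed_vector) \<Rightarrow> real" where
  "l1_norm x = (\<Sum>n. norm (x n))"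

lemma norm_le_l1_norm: "l1 x \<Longrightarrow> norm (x n) \<le> l1_norm x"
  unfolding l1_def l1_norm_def using sum_le_suminf[of "\<lambda>n. norm (x n)" "{n}"] by simp

lemma l1_add [simp]: "l1 x \<Longrightarrow> l1 y \<Longrightarrow> l1 (\<lambda>n. x n + y n)"
  unfolding l1_def
  by (rule summable_comparison_test'[where g = "\<lambda>n. norm (x n) + norm (y n)"])
    (auto intro: summable_add norm_triangle_ineq)

lemma l1_diff [simp]: "l1 x \<Longrightarrow> l1 y \<Longrightarrow> l1 (\<lambda>n. x n - y n)"
  using l1_add[of x "\<lambda>n. - y n"] by (simp add: l1_def)

lemma l1_zero [simp]: "l1 (\<lambda>n. 0)"
  by (simp add: l1_def)

lemma l1_mult_right [simp]:
  fixes x :: "nat \<Rightarrow> 'a::real_normed_div_algebra"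
  shows "l1 x \<Longrightarrow> l1 (\<lambda>n. x n * c)"
  unfolding l1_def by (simp add: norm_mult summable_mult2)

lemma l1_sum [simp]: "(\<And>j. j \<in> J \<Longrightarrow> l1 (y j)) \<Longrightarrow> l1 (\<lambda>n. \<Sum>j\<in>J. y j n)"
  by (induction J rule: infinite_finite_induct) simp_all

definition hinner :: "(nat \<Rightarrow> quaternion) \<Rightarrow> (nat \<Rightarrow> quaternion) \<Rightarrow> quaternion" where
  "hinner x y = (\<Sum>n. hcnj (x n) * y n)"

lemma summable_norm_hinner:
  assumes "l1 x" "l1 y"
  shows "summable (\<lambda>n. norm (hcnj (x n) * y n))"
proof (rule summable_comparison_test')
  show "summable (\<lambda>n. l1_norm x * norm (y n))"
    using assms(2) by (simp add: l1_def summable_mult)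
  show "norm (norm (hcnj (x n) * y n)) \<le> l1_norm x * norm (y n)" for n
    using norm_le_l1_norm[OF assms(1), of n] by (simp add: norm_mult mult_right_mono)
qed

lemma summable_hinner: "l1 x \<Longrightarrow> l1 y \<Longrightarrow> summable (\<lambda>n. hcnj (x n) * y n)"
  by (rule summable_norm_cancel[OF summable_norm_hinner])

lemma hcnj_hinner: "l1 x \<Longrightarrow> l1 y \<Longrightarrow> hcnj (hinner x y) = hinner y x"
  by (simp add: hinner_def hcnj_suminf summable_hinner hcnj_mult)

lemma hinner_mult_right: "l1 x \<Longrightarrow> l1 y \<Longrightarrow> hinner x (\<lambda>n. y n * c) = hinner x y * c"
  by (simp add: hinner_def suminf_mult2 summable_hinner mult.assoc)

lemma hinner_diff_right:
  "l1 x \<Longrightarrow> l1 y \<Longrightarrow> l1 z \<Longrightarrow> hinner x (\<lambda>n. y n - z n) = hinner x y - hinner x z"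
  by (simp add: hinner_def suminf_diff summable_hinner right_diff_distrib)

lemma hinner_sum_right:
  "l1 x \<Longrightarrow> (\<And>j. j \<in> J \<Longrightarrow> l1 (y j)) \<Longrightarrow>
    hinner x (\<lambda>n. \<Sum>j\<in>J. y j n) = (\<Sum>j\<in>J. hinner x (y j))"
  by (simp add: hinner_def suminf_sum summable_hinner sum_distrib_left)

lemma hinner_zero_right [simp]: "hinner x (\<lambda>n. 0) = 0"
  by (simp add: hinner_def)

definition conv :: "(nat \<Rightarrow> 'a::semiring_0) \<Rightarrow> (nat \<Rightarrow> 'a) \<Rightarrow> nat \<Rightarrow> 'a" where
  "conv b x = (\<lambda>n. \<Sum>k\<le>n. b k * x (n - k))"

definition conv_adj :: "(nat \<Rightarrow> quaternion) \<Rightarrow> (nat \<Rightarrow> quaternion) \<Rightarrow> nat \<Rightarrow> quaternion" where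
  "conv_adj b x = (\<lambda>n. \<Sum>k. hcnj (b k) * x (n + k))"

lemma conv_eq_fps_nth: "conv a b = fps_nth (Abs_fps a * Abs_fps b)"
  by (rule ext) (simp add: conv_def fps_mult_nth atLeast0AtMost)

lemma conv_assoc: "conv (conv a b) c = conv a (conv b c)"
  by (simp add: conv_eq_fps_nth mult.assoc fps_nth_inverse)

lemma conv_diff:
  fixes b :: "nat \<Rightarrow> 'a::ring"
  shows "conv b (\<lambda>n. v n - w n) = (\<lambda>n. conv b v n - conv b w n)"
  by (simp add: conv_def right_diff_distrib sum_subtractf)

lemma conv_eq_0_imp_eq_0:
  fixes b z :: "nat \<Rightarrow> 'a::semiring_no_zero_divisors"
  assumes b0: "b 0 \<noteq> 0" and z: "conv b z = (\<lambda>n. 0)"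
  shows "z n = 0"
proof (induction n rule: less_induct)
  case (less n)
  have "conv b z n = (\<Sum>k\<in>{0}. b k * z (n - k))"
    unfolding conv_def by (rule sum.mono_neutral_right) (auto simp: less)
  then have "b 0 * z n = 0"
    using z by simp
  then show "z n = 0"
    using b0 by simp
qed

lemma l1_conv:
  fixes b x :: "nat \<Rightarrow> 'a::real_normed_algebra"
  assumes "l1 b" "l1 x"
  shows "l1 (conv b x)"
proof -
  have summable: "summable (\<lambda>n. \<Sum>k\<le>n. norm (b k) * norm (x (n - k)))"
    using Cauchy_product_sums[of "\<lambda>n. norm (b n)" "\<lambda>n. norm (x n)"] assms
    by (simp add: l1_def sums_summable)
  have "norm (conv b x n) \<le> (\<Sum>k\<le>n. norm (b k) * norm (x (n - k)))" for n
    unfolding conv_def by (rule order_trans[OF norm_sum]) (simp add: norm_mult_ineq sum_mono)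
  then show ?thesis
    unfolding l1_def by (intro summable_comparison_test'[OF summable]) simp
qed

lemma summable_norm_conv_adj_terms:
  assumes "l1 b" "l1 x"
  shows "summable (\<lambda>k. norm (b k) * norm (x (n + k)))"
proof (rule summable_comparison_test')
  show "summable (\<lambda>k. norm (b k) * l1_norm x)"
    using assms(1) by (simp add: l1_def summable_mult2)
  show "norm (norm (b k) * norm (x (n + k))) \<le> norm (b k) * l1_norm x" for k
    using norm_le_l1_norm[OF assms(2), of "n + k"] by (simp add: mult_left_mono)
qed

lemma summable_conv_adj_terms:
  "l1 b \<Longrightarrow> l1 x \<Longrightarrow> summable (\<lambda>k. hcnj (b k) * x (n + k))"
  by (rule summable_norm_cancel) (simp add: norm_mult summable_norm_conv_adj_terms)

lemma l1_conv_adj: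
  assumes b: "l1 b" and x: "l1 x"
  shows "l1 (conv_adj b x)"
proof -
  define s where "s n = (\<Sum>k. norm (b k) * norm (x (n + k)))" for n
  have s_nonneg: "0 \<le> s n" for n
    unfolding s_def by (rule suminf_nonneg) (simp_all add: summable_norm_conv_adj_terms b x)
  have "sum s {..<N} \<le> (\<Sum>k. norm (b k) * l1_norm x)" for N
  proof -
    have "sum s {..<N} = (\<Sum>k. \<Sum>n<N. norm (b k) * norm (x (n + k)))"
      unfolding s_def by (rule suminf_sum[symmetric]) (simp add: summable_norm_conv_adj_terms b x)
    also have "\<dots> \<le> (\<Sum>k. norm (b k) * l1_norm x)"
    proof (rule suminf_le)
      fix k
      have "(\<Sum>n<N. norm (x (n + k))) = (\<Sum>m\<in>(\<lambda>n. n + k) ` {..<N}. norm (x m))"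
        by (simp add: sum.reindex)
      also have "\<dots> \<le> l1_norm x"
        unfolding l1_norm_def by (rule sum_le_suminf) (use x in \<open>auto simp: l1_def\<close>)
      finally show "(\<Sum>n<N. norm (b k) * norm (x (n + k))) \<le> norm (b k) * l1_norm x"
        by (simp add: mult_left_mono flip: sum_distrib_left)
      show "summable (\<lambda>k. \<Sum>n<N. norm (b k) * norm (x (n + k)))"
        by (rule summable_sum) (simp add: summable_norm_conv_adj_terms b x)
      show "summable (\<lambda>k. norm (b k) * l1_norm x)"
        using b by (simp add: l1_def summable_mult2)
    qed
    finally show ?thesis .
  qed
  then have summable: "summable s"
    by (intro summableI_nonneg_bounded s_nonneg)
  have "norm (conv_adj b x n) \<le> s n" for n
  proof -
    have "norm (conv_adj b x n) \<le> (\<Sum>k. norm (hcnj (b k) * x (n + k)))"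
      unfolding conv_adj_def
      by (rule summable_norm) (simp add: norm_mult summable_norm_conv_adj_terms b x)
    then show ?thesis
      by (simp add: s_def norm_mult)
  qed
  then show ?thesis
    unfolding l1_def by (intro summable_comparison_test'[OF summable]) simp
qed

lemma summable_on_conv_adj_norms:
  assumes b: "l1 b" and x: "l1 x" and y: "l1 y"
  shows "(\<lambda>(n, k). norm (x n) * (norm (b k) * norm (y (n + k)))) summable_on UNIV"
proof -
  have inner: "summable (\<lambda>k. norm (x n) * (norm (b k) * norm (y (n + k))))" for n
    by (rule summable_mult) (rule summable_norm_conv_adj_terms[OF b y])
  have bound: "(\<Sum>k. norm (x n) * (norm (b k) * norm (y (n + k)))) \<le> norm (x n) * (l1_norm b * l1_norm y)"
    for n
  proof -
    have "(\<Sum>k. norm (b k) * norm (y (n + k))) \<le> (\<Sum>k. norm (b k) * l1_norm y)"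
      by (rule suminf_le)
        (simp_all add: norm_le_l1_norm[OF y] mult_left_mono summable_norm_conv_adj_terms[OF b y]
          summable_mult2 b[unfolded l1_def])
    also have "\<dots> = l1_norm b * l1_norm y"
      using b by (simp add: l1_def l1_norm_def suminf_mult2)
    finally show ?thesis
      by (simp add: suminf_mult[OF summable_norm_conv_adj_terms[OF b y]] mult_left_mono)
  qed
  have "summable (\<lambda>n. norm (\<Sum>k. norm (x n) * (norm (b k) * norm (y (n + k)))))"
  proof (rule summable_comparison_test'[where g = "\<lambda>n. norm (x n) * (l1_norm b * l1_norm y)"])
    show "summable (\<lambda>n. norm (x n) * (l1_norm b * l1_norm y))"
      using x by (simp add: l1_def summable_mult2)
    show "norm (norm (\<Sum>k. norm (x n) * (norm (b k) * norm (y (n + k)))))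
        \<le> norm (x n) * (l1_norm b * l1_norm y)" for n
      using bound[of n] suminf_nonneg[OF inner[of n]] by simp
  qed
  then have "(\<lambda>n. \<Sum>k. norm (x n) * (norm (b k) * norm (y (n + k)))) summable_on UNIV"
    by (rule norm_summable_imp_summable_on)
  then show ?thesis
    unfolding UNIV_Times_UNIV[symmetric]
    by (rule summable_on_SigmaI[rotated]) (simp_all add: sums_nonneg_imp_has_sum[OF summable_sums[OF inner]])
qed

lemma hinner_conv_left:
  assumes b: "l1 b" and x: "l1 x" and y: "l1 y"
  shows "hinner (conv b x) y = hinner x (conv_adj b y)"
proof -
  define F where "F = (\<lambda>(n, k). hcnj (x n) * (hcnj (b k) * y (n + k)))"
  have norm_F: "(\<lambda>z. norm (F z)) = (\<lambda>(n, k). norm (x n) * (norm (b k) * norm (y (n + k))))"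
    by (auto simp: F_def norm_mult)
  have F: "F summable_on UNIV"
    using abs_summable_summable[of F UNIV] summable_on_conv_adj_norms[OF b x y] norm_F by simp
  \<comment> \<open>F is absolutely summable: sum it by rows, then along antidiagonals.\<close>
  have row: "(\<Sum>k. F (n, k)) = hcnj (x n) * conv_adj b y n" for n
    by (simp add: F_def conv_adj_def suminf_mult summable_conv_adj_terms b y)
  have "hinner x (conv_adj b y) = (\<Sum>\<^sub>\<infinity>n. \<Sum>k. F (n, k))"
    unfolding hinner_def row
    by (rule infsum_nat_eq_suminf[symmetric]) (simp add: summable_norm_hinner x l1_conv_adj b y)
  also have "\<dots> = (\<Sum>\<^sub>\<infinity>n. \<Sum>\<^sub>\<infinity>k. F (n, k))"
  proof (rule infsum_cong)
    fix n
    have "summable (\<lambda>k. norm (F (n, k)))"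
      using fun_cong[OF norm_F, of "(n, _)"] summable_norm_conv_adj_terms[OF b y, of n]
      by (simp add: summable_mult)
    then show "(\<Sum>k. F (n, k)) = (\<Sum>\<^sub>\<infinity>k. F (n, k))"
      by (rule infsum_nat_eq_suminf[symmetric])
  qed
  also have "\<dots> = infsum F UNIV"
    using F by (subst infsum_Sigma'_banach) simp_all
  also have "\<dots> = (\<Sum>\<^sub>\<infinity>N. \<Sum>k\<le>N. F (N - k, k))"
    using F by (rule infsum_antidiagonal)
  also have "\<dots> = (\<Sum>\<^sub>\<infinity>N. hcnj (conv b x N) * y N)"
  proof (rule infsum_cong)
    fix N
    have "(\<Sum>k\<le>N. F (N - k, k)) = (\<Sum>k\<le>N. hcnj (x (N - k)) * hcnj (b k) * y N)"
      by (rule sum.cong) (simp_all add: F_def mult.assoc)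
    then show "(\<Sum>k\<le>N. F (N - k, k)) = hcnj (conv b x N) * y N"
      by (simp add: conv_def hcnj_sum hcnj_mult sum_distrib_right)
  qed
  also have "\<dots> = hinner (conv b x) y"
    unfolding hinner_def by (rule infsum_nat_eq_suminf[OF summable_norm_hinner[OF l1_conv[OF b x] y]])
  finally show ?thesis ..
qed

lemma hinner_conv_adj_left:
  assumes "l1 b" "l1 x" "l1 y"
  shows "hinner (conv_adj b x) y = hinner x (conv b y)"
  using assms by (metis hcnj_hinner hinner_conv_left l1_conv l1_conv_adj)

definition unit_seq :: "nat \<Rightarrow> nat \<Rightarrow> quaternion" where
  "unit_seq n = (\<lambda>m. if m = n then 1 else 0)"

lemma l1_unit_seq [simp]: "l1 (unit_seq n)"
  using summable_single[of n "\<lambda>_. 1::real"]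
  by (simp add: l1_def unit_seq_def if_distrib[of norm] cong: if_cong)

lemma hinner_unit_seq: "hinner (unit_seq n) z = z n"
proof -
  have "(\<lambda>m. hcnj (unit_seq n m) * z m) = (\<lambda>m. if m = n then z m else 0)"
    by (auto simp: unit_seq_def)
  then show ?thesis
    unfolding hinner_def using sums_single[of n z] by (simp add: sums_iff)
qed

lemma conv_adj_unit_seq_0: "conv_adj (unit_seq 0) x = x"
proof
  fix n
  have "(\<lambda>k. hcnj (unit_seq 0 k) * x (n + k)) = (\<lambda>k. if k = 0 then x (n + k) else 0)"
    by (auto simp: unit_seq_def)
  then show "conv_adj (unit_seq 0) x n = x n"
    unfolding conv_adj_def using sums_single[of 0 "\<lambda>k. x (n + k)"] by (simp add: sums_iff)
qed

lemma conv_adj_conv: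
  assumes a: "l1 a" and b: "l1 b" and x: "l1 x"
  shows "conv_adj (conv a b) x = conv_adj b (conv_adj a x)"
proof
  fix n
  have "conv_adj (conv a b) x n = hinner (conv (conv a b) (unit_seq n)) x"
    by (simp add: hinner_unit_seq hinner_conv_left l1_conv a b x)
  also have "\<dots> = hinner (conv a (conv b (unit_seq n))) x"
    by (simp add: conv_assoc)
  also have "\<dots> = conv_adj b (conv_adj a x) n"
    by (simp add: hinner_unit_seq hinner_conv_left l1_conv l1_conv_adj a b x)
  finally show "conv_adj (conv a b) x n = conv_adj b (conv_adj a x) n" .
qed

section \<open>A single Blaschke factor\<close>

lemma power_mult_hcnj_power: "a ^ k * hcnj a ^ k = ((norm a)\<^sup>2) ^ k *\<^sub>R 1"
proof (induction k)
  case (Suc k)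
  have "a ^ Suc k * hcnj a ^ Suc k = a * (a ^ k * hcnj a ^ k) * hcnj a"
    by (simp add: power_Suc2 mult.assoc power_commutes)
  then show ?case
    by (simp add: Suc mult_hcnj)
qed simp

lemma hcnj_power_mult_power: "hcnj a ^ k * a ^ k = ((norm a)\<^sup>2) ^ k *\<^sub>R 1"
  using power_mult_hcnj_power[of "hcnj a" k] by simp

lemma hcnj_power_Suc_mult_power:
  "hcnj a ^ Suc n * a ^ (Suc n + j) = (norm a)\<^sup>2 *\<^sub>R (hcnj a ^ n * a ^ (n + j))"
proof -
  have "a ^ (Suc n + j) = a * a ^ (n + j)" and "hcnj a ^ Suc n = hcnj a ^ n * hcnj a"
    by (simp_all add: power_commutes)
  then have "hcnj a ^ Suc n * a ^ (Suc n + j) = hcnj a ^ n * (hcnj a * a) * a ^ (n + j)"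
    by (simp only: mult.assoc)
  then show ?thesis
    by (simp add: hcnj_mult_self)
qed

lemma hcnj_blaschke_coeff:
  "hcnj (blaschke_coeff a k) =
    (if k = 0 then norm a *\<^sub>R 1 else (- ((1 - (norm a)\<^sup>2) / norm a)) *\<^sub>R a ^ k)"
  by (simp add: blaschke_coeff_def hcnj_power)

definition normalized_szego :: "quaternion \<Rightarrow> nat \<Rightarrow> quaternion" where
  "normalized_szego a = (\<lambda>n. sqrt (1 - (norm a)\<^sup>2) *\<^sub>R hcnj a ^ n)"

locale blaschke_factor =
  fixes a :: quaternion
  assumes nonzero: "a \<noteq> 0" and in_ball: "norm a < 1"
begin

abbreviation \<beta> where "\<beta> \<equiv> blaschke_coeff a"
abbreviation u where "u \<equiv> normalized_szego a"

lemma norm_sq_less_1: "(norm a)\<^sup>2 < 1"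
  using in_ball by (simp add: power_less_one_iff)

lemma l1_blaschke_coeff: "l1 \<beta>"
proof -
  define s where "s = (1 - (norm a)\<^sup>2) / norm a"
  have "0 \<le> s"
    using norm_sq_less_1 by (simp add: s_def)
  then have bound: "norm (\<beta> n) \<le> (norm a + s) * norm a ^ n" for n
    by (cases "n = 0") (simp_all add: blaschke_coeff_def norm_power mult_right_mono flip: s_def)
  have "summable (\<lambda>n. (norm a + s) * norm a ^ n)"
    using in_ball by (simp add: summable_mult summable_geometric)
  then show ?thesis
    unfolding l1_def by (rule summable_comparison_test') (simp add: bound)
qed

lemma l1_normalized_szego: "l1 u"
  using in_ball by (simp add: l1_def normalized_szego_def norm_power summable_mult summable_geometric)

lemma normalized_szego_mult_hcnj: "u n * hcnj (u m) = (1 - (norm a)\<^sup>2) *\<^sub>R (hcnj a ^ n * a ^ m)"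
  using norm_sq_less_1 by (simp add: normalized_szego_def hcnj_power)

lemma sum_blaschke_coeff_mult_hcnj_shift:
  "(\<Sum>i\<le>n. \<beta> i * hcnj (\<beta> (i + j))) =
     (if j = 0 then 1 else 0) - (1 - (norm a)\<^sup>2) *\<^sub>R (hcnj a ^ n * a ^ (n + j))"
proof (induction n)
  case 0
  show ?case
  proof (cases "j = 0")
    case True
    then show ?thesis
      by (simp add: blaschke_coeff_def power2_eq_square algebra_simps)
  next
    case False
    then show ?thesis
      using nonzero by (simp add: blaschke_coeff_def hcnj_blaschke_coeff hcnj_power)
  qed
next
  case (Suc n)
  define X where "X = hcnj a ^ n * a ^ (n + j)"
  define q where "q = (norm a)\<^sup>2"
  have "\<beta> (Suc n) * hcnj (\<beta> (Suc n + j)) = ((1 - q) / norm a)\<^sup>2 *\<^sub>R (hcnj a ^ Suc n * a ^ (Suc n + j))"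
    by (simp add: blaschke_coeff_def hcnj_blaschke_coeff q_def power2_eq_square hcnj_power
        del: power_Suc)
  also have "\<dots> = (((1 - q) / norm a)\<^sup>2 * (norm a)\<^sup>2) *\<^sub>R X"
    unfolding hcnj_power_Suc_mult_power by (simp add: X_def q_def)
  also have "((1 - q) / norm a)\<^sup>2 * (norm a)\<^sup>2 = (1 - q) * (1 - q)"
    using nonzero by (simp add: power2_eq_square)
  finally have "\<beta> (Suc n) * hcnj (\<beta> (Suc (n + j))) = ((1 - q) * (1 - q)) *\<^sub>R X"
    by simp
  then have "(\<Sum>i\<le>Suc n. \<beta> i * hcnj (\<beta> (i + j))) =
      (if j = 0 then 1 else 0) - ((1 - q) *\<^sub>R X - ((1 - q) * (1 - q)) *\<^sub>R X)"
    using Suc by (simp add: X_def q_def del: power_Suc)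
  also have "(1 - q) *\<^sub>R X - ((1 - q) * (1 - q)) *\<^sub>R X = ((1 - q) * q) *\<^sub>R X"
    by (simp only: scaleR_diff_left[symmetric]) (simp add: algebra_simps)
  also have "((1 - q) * q) *\<^sub>R X = (1 - q) *\<^sub>R (hcnj a ^ Suc n * a ^ (Suc n + j))"
    unfolding hcnj_power_Suc_mult_power by (simp add: X_def q_def)
  finally show ?case
    by (simp add: q_def)
qed

lemma sum_blaschke_coeff_mult_hcnj:
  "(\<Sum>k\<le>min n m. \<beta> (n - k) * hcnj (\<beta> (m - k))) = (if n = m then 1 else 0) - u n * hcnj (u m)"
proof -
  have le: "(\<Sum>k\<le>n. \<beta> (n - k) * hcnj (\<beta> (m - k))) = (if n = m then 1 else 0) - u n * hcnj (u m)"
    if "n \<le> m" for n m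
  proof -
    obtain j where m: "m = n + j"
      using \<open>n \<le> m\<close> le_Suc_ex by blast
    have "(\<Sum>k\<le>n. \<beta> (n - k) * hcnj (\<beta> (m - k))) = (\<Sum>i\<le>n. \<beta> i * hcnj (\<beta> (i + j)))"
      by (rule sum.reindex_bij_witness[where i = "\<lambda>k. n - k" and j = "\<lambda>k. n - k"]) (auto simp: m)
    then show ?thesis
      by (simp add: sum_blaschke_coeff_mult_hcnj_shift normalized_szego_mult_hcnj m)
  qed
  show ?thesis
  proof (cases "n \<le> m")
    case True
    then show ?thesis
      using le by (simp add: min_def)
  next
    case False
    then have "(\<Sum>k\<le>min n m. \<beta> (n - k) * hcnj (\<beta> (m - k))) =
        hcnj (\<Sum>k\<le>m. \<beta> (m - k) * hcnj (\<beta> (n - k)))"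
      by (simp add: hcnj_sum hcnj_mult min_def)
    then show ?thesis
      using False le[of m n] by (simp add: hcnj_mult)
  qed
qed

lemma hinner_normalized_szego_self: "hinner u u = 1"
proof -
  define q where "q = (norm a)\<^sup>2"
  have q: "norm q < 1"
    using norm_sq_less_1 by (simp add: q_def)
  have "hcnj (u n) * u n = ((1 - q) * q ^ n) *\<^sub>R 1" for n
    using norm_sq_less_1
    by (simp add: normalized_szego_def hcnj_power power_mult_hcnj_power q_def mult.assoc)
  moreover have "(\<lambda>n. ((1 - q) * q ^ n) *\<^sub>R (1::quaternion)) sums (((1 - q) * (1 / (1 - q))) *\<^sub>R 1)"
    by (intro sums_scaleR_left sums_mult geometric_sums q)
  ultimately show ?thesis
    using q unfolding hinner_def by (simp add: sums_iff)
qed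

lemma conv_adj_blaschke_normalized_szego: "conv_adj \<beta> u = (\<lambda>n. 0)"
proof
  fix n
  define q where "q = (norm a)\<^sup>2"
  define s where "s = (1 - q) / norm a"
  define c where "c k = (if k = 0 then norm a else - s * q ^ k)" for k
  have q: "norm q < 1"
    using norm_sq_less_1 by (simp add: q_def)
  have terms: "hcnj (\<beta> k) * u (n + k) = c k *\<^sub>R (sqrt (1 - q) *\<^sub>R hcnj a ^ n)" for k
  proof -
    have "hcnj a ^ (n + k) = hcnj a ^ k * hcnj a ^ n"
      by (simp add: add.commute flip: power_add)
    then show ?thesis
      by (cases "k = 0") (simp_all add: hcnj_blaschke_coeff normalized_szego_def c_def s_def q_def
          mult.assoc power_mult_hcnj_power flip: mult.assoc[of "a ^ k"])
  qed
  have "(\<lambda>k. - s * q ^ k + (if k = 0 then norm a + s else 0)) sums (- s * (1 / (1 - q)) + (norm a + s))"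
    by (intro sums_add sums_mult geometric_sums q) (rule sums_single)
  moreover have "- s * (1 / (1 - q)) + (norm a + s) = 0"
    using q nonzero by (simp add: s_def q_def field_simps power2_eq_square)
  moreover have "(\<lambda>k. - s * q ^ k + (if k = 0 then norm a + s else 0)) = c"
    by (auto simp: c_def)
  ultimately have "c sums 0"
    by simp
  then have "(\<lambda>k. hcnj (\<beta> k) * u (n + k)) sums 0"
    unfolding terms using sums_scaleR_left[of c 0 "sqrt (1 - q) *\<^sub>R hcnj a ^ n"] by simp
  then show "conv_adj \<beta> u n = 0"
    by (simp add: conv_adj_def sums_iff)
qed

lemma conv_adj_blaschke_sums:
  assumes "l1 y"
  shows "(\<lambda>m. if k \<le> m then hcnj (\<beta> (m - k)) * y m else 0) sums conv_adj \<beta> y k"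
proof -
  have "(\<lambda>i. hcnj (\<beta> i) * y (k + i)) sums conv_adj \<beta> y k"
    unfolding conv_adj_def
    by (rule summable_sums[OF summable_conv_adj_terms[OF l1_blaschke_coeff assms]])
  then show ?thesis
    using sums_zero_iff_shift[of k "\<lambda>m. if k \<le> m then hcnj (\<beta> (m - k)) * y m else 0"]
    by (simp add: add.commute)
qed

lemma conv_conv_adj_blaschke:
  assumes y: "l1 y"
  shows "conv \<beta> (conv_adj \<beta> y) = (\<lambda>n. y n - u n * hinner u y)"
proof
  fix n
  have terms: "(\<Sum>k\<le>n. \<beta> (n - k) * (if k \<le> m then hcnj (\<beta> (m - k)) * y m else 0)) =
      (if m = n then y m else 0) - u n * (hcnj (u m) * y m)" for m
  proof -
    have "(\<Sum>k\<le>n. \<beta> (n - k) * (if k \<le> m then hcnj (\<beta> (m - k)) * y m else 0)) =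
        (\<Sum>k\<in>{k\<in>{..n}. k \<le> m}. \<beta> (n - k) * hcnj (\<beta> (m - k)) * y m)"
      by (subst sum.inter_filter) (auto intro!: sum.cong simp: mult.assoc)
    also have "{k\<in>{..n}. k \<le> m} = {..min n m}"
      by auto
    also have "(\<Sum>k\<le>min n m. \<beta> (n - k) * hcnj (\<beta> (m - k)) * y m) =
        (\<Sum>k\<le>min n m. \<beta> (n - k) * hcnj (\<beta> (m - k))) * y m"
      by (simp add: sum_distrib_right)
    finally show ?thesis
      unfolding sum_blaschke_coeff_mult_hcnj by (simp add: left_diff_distrib mult.assoc)
  qed
  have "(\<lambda>m. \<Sum>k\<le>n. \<beta> (n - k) * (if k \<le> m then hcnj (\<beta> (m - k)) * y m else 0)) sums
      (\<Sum>k\<le>n. \<beta> (n - k) * conv_adj \<beta> y k)"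
    by (rule sums_sum, rule sums_mult, rule conv_adj_blaschke_sums[OF y])
  moreover have "(\<lambda>m. (if m = n then y m else 0) - u n * (hcnj (u m) * y m)) sums
      (y n - u n * hinner u y)"
    unfolding hinner_def
    by (rule sums_diff[OF sums_single sums_mult[OF summable_sums[OF summable_hinner]]])
      (rule l1_normalized_szego, rule y)
  ultimately have "(\<Sum>k\<le>n. \<beta> (n - k) * conv_adj \<beta> y k) = y n - u n * hinner u y"
    unfolding terms by (rule sums_unique2)
  moreover have "conv \<beta> (conv_adj \<beta> y) n = (\<Sum>k\<le>n. \<beta> (n - k) * conv_adj \<beta> y k)"
    unfolding conv_def by (rule sum.reindex_bij_witness[where i = "\<lambda>k. n - k" and j = "\<lambda>k. n - k"]) auto
  ultimately show "conv \<beta> (conv_adj \<beta> y) n = y n - u n * hinner u y"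
    by simp
qed

lemma hinner_minus_hinner_conv_adj_blaschke:
  assumes x: "l1 x" and y: "l1 y"
  shows "hinner x y - hinner (conv_adj \<beta> x) (conv_adj \<beta> y) = hinner x u * hinner u y"
proof -
  have "hinner (conv_adj \<beta> x) (conv_adj \<beta> y) = hcnj (hinner (conv \<beta> (conv_adj \<beta> y)) x)"
    using x y l1_blaschke_coeff
    by (simp add: hcnj_hinner hinner_conv_left l1_conv_adj)
  also have "\<dots> = hinner x y - hinner x u * hinner u y"
    using x y l1_normalized_szego
    by (simp add: conv_conv_adj_blaschke hcnj_hinner hinner_diff_right hinner_mult_right)
  finally show ?thesis
    by simp
qed

lemma hinner_conv_blaschke_normalized_szego: "l1 x \<Longrightarrow> hinner (conv \<beta> x) u = 0"
  by (simp add: hinner_conv_left l1_blaschke_coeff l1_normalized_szego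
      conv_adj_blaschke_normalized_szego)

lemma conv_adj_conv_blaschke:
  assumes y: "l1 y"
  shows "conv_adj \<beta> (conv \<beta> y) = y"
proof
  have l1_conv_y: "l1 (conv \<beta> y)"
    by (rule l1_conv[OF l1_blaschke_coeff y])
  then have "hinner u (conv \<beta> y) = 0"
    using hcnj_hinner[OF l1_conv_y l1_normalized_szego] by (simp add: hinner_conv_blaschke_normalized_szego y)
  then have "conv \<beta> (\<lambda>n. conv_adj \<beta> (conv \<beta> y) n - y n) = (\<lambda>n. 0)"
    by (simp add: conv_diff conv_conv_adj_blaschke l1_conv_y)
  moreover have "\<beta> 0 \<noteq> 0"
    using nonzero by (simp add: blaschke_coeff_def)
  ultimately show "conv_adj \<beta> (conv \<beta> y) n = y n" for n
    using conv_eq_0_imp_eq_0[of \<beta> "\<lambda>n. conv_adj \<beta> (conv \<beta> y) n - y n" n] by simp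
qed

lemma hinner_conv_blaschke: "l1 x \<Longrightarrow> l1 y \<Longrightarrow> hinner (conv \<beta> x) (conv \<beta> y) = hinner x y"
  by (simp add: hinner_conv_left l1_blaschke_coeff l1_conv conv_adj_conv_blaschke)

end

section \<open>Finite Blaschke products\<close>

definition blaschke_seq :: "quaternion list \<Rightarrow> nat \<Rightarrow> quaternion" where
  "blaschke_seq L = fps_nth (prod_list (map blaschke_fps L))"

lemma blaschke_seq_Nil: "blaschke_seq [] = unit_seq 0"
  by (auto simp: blaschke_seq_def unit_seq_def)

lemma blaschke_seq_Cons: "blaschke_seq (a # L) = conv (blaschke_coeff a) (blaschke_seq L)"
  by (simp add: blaschke_seq_def conv_eq_fps_nth blaschke_fps_def fps_nth_inverse)

fun defect_basis :: "quaternion list \<Rightarrow> (nat \<Rightarrow> quaternion) list" where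
  "defect_basis [] = []"
| "defect_basis (a # L) = normalized_szego a # map (conv (blaschke_coeff a)) (defect_basis L)"

lemma length_defect_basis: "length (defect_basis L) = length L"
  by (induction L) auto

lemma blaschke_factor_Cons:
  assumes "set (a # L) \<subseteq> ball 0 1 - {0}"
  shows "blaschke_factor a" and "set L \<subseteq> ball 0 1 - {0}"
  using assms by (auto simp: blaschke_factor_def)

lemma l1_blaschke_seq: "set L \<subseteq> ball 0 1 - {0} \<Longrightarrow> l1 (blaschke_seq L)"
proof (induction L)
  case (Cons a L)
  have "l1 (blaschke_coeff a)"
    by (rule blaschke_factor.l1_blaschke_coeff[OF blaschke_factor_Cons(1)[OF Cons.prems]])
  moreover have "l1 (blaschke_seq L)"
    by (rule Cons.IH[OF blaschke_factor_Cons(2)[OF Cons.prems]])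
  ultimately show ?case
    by (simp add: blaschke_seq_Cons l1_conv)
qed (simp add: blaschke_seq_Nil)

lemma l1_defect_basis: "set L \<subseteq> ball 0 1 - {0} \<Longrightarrow> w \<in> set (defect_basis L) \<Longrightarrow> l1 w"
  by (induction L arbitrary: w)
    (auto simp: blaschke_factor_Cons l1_conv blaschke_factor.l1_blaschke_coeff
      blaschke_factor.l1_normalized_szego)

lemma hinner_minus_hinner_conv_adj_blaschke_seq:
  assumes "set L \<subseteq> ball 0 1 - {0}" "l1 x" "l1 y"
  shows "hinner x y - hinner (conv_adj (blaschke_seq L) x) (conv_adj (blaschke_seq L) y) =
    (\<Sum>w\<leftarrow>defect_basis L. hinner x w * hinner w y)"
  using assms
proof (induction L arbitrary: x y)
  case Nil
  then show ?case
    by (simp add: blaschke_seq_Nil conv_adj_unit_seq_0)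
next
  case (Cons a L)
  interpret blaschke_factor a
    using blaschke_factor_Cons(1)[OF Cons.prems(1)] .
  have L: "set L \<subseteq> ball 0 1 - {0}"
    using blaschke_factor_Cons(2)[OF Cons.prems(1)] .
  let ?x = "conv_adj \<beta> x" and ?y = "conv_adj \<beta> y"
  have l1: "l1 x" "l1 y" "l1 ?x" "l1 ?y"
    using Cons.prems l1_conv_adj l1_blaschke_coeff by auto
  have "hinner ?x w * hinner w ?y = hinner x (conv \<beta> w) * hinner (conv \<beta> w) y"
    if "w \<in> set (defect_basis L)" for w
    using l1 l1_defect_basis[OF L that]
    by (simp add: hinner_conv_adj_left hinner_conv_left l1_blaschke_coeff)
  then have "(\<Sum>w\<leftarrow>defect_basis L. hinner ?x w * hinner w ?y) =
      (\<Sum>w\<leftarrow>map (conv \<beta>) (defect_basis L). hinner x w * hinner w y)"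
    by (simp add: comp_def cong: map_cong)
  moreover have "conv_adj (blaschke_seq (a # L)) z = conv_adj (blaschke_seq L) (conv_adj \<beta> z)"
    if "l1 z" for z
    unfolding blaschke_seq_Cons using l1_blaschke_coeff l1_blaschke_seq[OF L] that by (rule conv_adj_conv)
  ultimately show ?case
    using Cons.IH[OF L l1(3,4)] hinner_minus_hinner_conv_adj_blaschke[OF l1(1,2)] l1(1,2)
    by (simp add: algebra_simps)
qed

lemma hinner_defect_basis:
  assumes "set L \<subseteq> ball 0 1 - {0}" "i < length L" "j < length L"
  shows "hinner (defect_basis L ! i) (defect_basis L ! j) = (if i = j then 1 else 0)"
  using assms
proof (induction L arbitrary: i j)
  case Nil
  then show ?case
    by simp
next
  case (Cons a L)
  interpret blaschke_factor a
    using blaschke_factor_Cons(1)[OF Cons.prems(1)] .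
  have L: "set L \<subseteq> ball 0 1 - {0}"
    using blaschke_factor_Cons(2)[OF Cons.prems(1)] .
  have l1: "l1 (defect_basis L ! k)" if "k < length L" for k
    using l1_defect_basis[OF L] that by (simp add: length_defect_basis)
  have orth: "hinner (conv \<beta> (defect_basis L ! k)) u = 0" "hinner u (conv \<beta> (defect_basis L ! k)) = 0"
    if "k < length L" for k
    using hinner_conv_blaschke_normalized_szego[OF l1[OF that]]
      hcnj_hinner[OF l1_conv[OF l1_blaschke_coeff l1[OF that]] l1_normalized_szego]
    by simp_all
  show ?case
    using Cons.prems Cons.IH[OF L] l1 orth
    by (cases i; cases j) (simp_all add: length_defect_basis hinner_normalized_szego_self
        hinner_conv_blaschke)
qed

section \<open>The reproducing kernel\<close>

definition szego :: "quaternion \<Rightarrow> nat \<Rightarrow> quaternion" where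
  "szego p = (\<lambda>n. hcnj (p ^ n))"

definition series_eval :: "(nat \<Rightarrow> quaternion) \<Rightarrow> quaternion \<Rightarrow> quaternion" where
  "series_eval w p = (\<Sum>n. p ^ n * w n)"

lemma l1_szego: "norm p < 1 \<Longrightarrow> l1 (szego p)"
  unfolding l1_def szego_def by (simp add: norm_power summable_geometric)

lemma series_eval_eq_hinner: "series_eval w p = hinner (szego p) w"
  by (simp add: series_eval_def hinner_def szego_def)

lemma summable_norm_series_eval:
  fixes p :: "'a::real_normed_div_algebra"
  assumes p: "norm p < 1" and w: "l1 w"
  shows "summable (\<lambda>n. norm (p ^ n * w n))"
proof (rule summable_comparison_test')
  show "summable (\<lambda>n. norm (w n))" using w by (simp add: l1_def)
  show "norm (norm (p ^ n * w n)) \<le> norm (w n)" for n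
    using p by (simp add: norm_mult norm_power mult_left_le_one_le power_le_one)
qed

lemma summable_series_eval:
  fixes p :: "'a::{real_normed_div_algebra, banach}"
  shows "norm p < 1 \<Longrightarrow> l1 w \<Longrightarrow> summable (\<lambda>n. p ^ n * w n)"
  by (rule summable_norm_cancel[OF summable_norm_series_eval])

lemma conv_adj_szego:
  assumes p: "norm p < 1" and b: "l1 b"
  shows "conv_adj b (szego p) = (\<lambda>n. hcnj (p ^ n * series_eval b p))"
proof
  fix n
  have s: "summable (\<lambda>k. p ^ k * b k)" by (rule summable_series_eval[OF p b])
  have s2: "summable (\<lambda>k. p ^ n * (p ^ k * b k))" by (rule summable_mult[OF s])
  have "conv_adj b (szego p) n = (\<Sum>k. hcnj (p ^ n * (p ^ k * b k)))"
    unfolding conv_adj_def szego_def by (simp add: hcnj_mult power_add mult.assoc)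
  also have "\<dots> = hcnj (\<Sum>k. p ^ n * (p ^ k * b k))" by (rule hcnj_suminf[OF s2, symmetric])
  also have "(\<Sum>k. p ^ n * (p ^ k * b k)) = p ^ n * series_eval b p"
    unfolding series_eval_def by (rule suminf_mult[OF s])
  finally show "conv_adj b (szego p) n = hcnj (p ^ n * series_eval b p)" .
qed

lemma kernel_series_sums:
  assumes b: "l1 b" and p: "norm p < 1" and q: "norm q < 1"
  shows "(\<lambda>n. p ^ n * (1 - series_eval b p * hcnj (series_eval b q)) * hcnj (q ^ n)) sums
    (hinner (szego p) (szego q) - hinner (conv_adj b (szego p)) (conv_adj b (szego q)))"
proof -
  have "p ^ n * (1 - series_eval b p * hcnj (series_eval b q)) * hcnj (q ^ n)
      = hcnj (szego p n) * szego q n - hcnj (conv_adj b (szego p) n) * conv_adj b (szego q) n" for n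
    unfolding conv_adj_szego[OF p b] conv_adj_szego[OF q b]
    by (simp add: szego_def hcnj_mult algebra_simps)
  then show ?thesis
    unfolding hinner_def
    by (simp only:) (intro sums_diff summable_sums summable_hinner l1_szego l1_conv_adj b p q)
qed

lemma kernel_series_blaschke_seq_sums:
  assumes L: "set L \<subseteq> ball 0 1 - {0}" and p: "norm p < 1" and q: "norm q < 1"
  shows "(\<lambda>n. p ^ n * (1 - series_eval (blaschke_seq L) p * hcnj (series_eval (blaschke_seq L) q))
      * hcnj (q ^ n)) sums (\<Sum>w\<leftarrow>defect_basis L. series_eval w p * hcnj (series_eval w q))"
proof -
  have "hinner (szego p) w * hinner w (szego q) = series_eval w p * hcnj (series_eval w q)"
    if "w \<in> set (defect_basis L)" for w
    using l1_defect_basis[OF L that] by (simp add: series_eval_eq_hinner hcnj_hinner l1_szego q)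
  then have "(\<Sum>w\<leftarrow>defect_basis L. hinner (szego p) w * hinner w (szego q)) =
      (\<Sum>w\<leftarrow>defect_basis L. series_eval w p * hcnj (series_eval w q))"
    by (simp cong: map_cong)
  then show ?thesis
    using kernel_series_sums[OF l1_blaschke_seq[OF L] p q]
      hinner_minus_hinner_conv_adj_blaschke_seq[OF L l1_szego[OF p] l1_szego[OF q]]
    by simp
qed

lemma series_eval_sum:
  assumes "\<And>j. j \<in> J \<Longrightarrow> l1 (w j)" and "norm p < 1"
  shows "series_eval (\<lambda>n. \<Sum>j\<in>J. w j n * c j) p = (\<Sum>j\<in>J. series_eval (w j) p * c j)"
proof -
  have "series_eval (\<lambda>n. \<Sum>j\<in>J. w j n * c j) p = (\<Sum>n. \<Sum>j\<in>J. p ^ n * w j n * c j)"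
    by (simp add: series_eval_def sum_distrib_left mult.assoc)
  also have "\<dots> = (\<Sum>j\<in>J. \<Sum>n. p ^ n * w j n * c j)"
    using assms by (intro suminf_sum summable_mult2 summable_series_eval)
  also have "\<dots> = (\<Sum>j\<in>J. series_eval (w j) p * c j)"
    using assms by (intro sum.cong refl) (simp add: series_eval_def suminf_mult2 summable_series_eval)
  finally show ?thesis .
qed

lemma defect_basis_independent:
  assumes L: "set L \<subseteq> ball 0 1 - {0}"
    and eval_eq_0: "\<And>p. norm p < 1 \<Longrightarrow>
      (\<Sum>j<length (defect_basis L). series_eval (defect_basis L ! j) p * c j) = 0"
  shows "\<forall>i<length (defect_basis L). c i = 0"
proof (intro allI impI)
  fix i
  let ?W = "defect_basis L"
  assume i: "i < length ?W"
  have l1_W: "l1 (?W ! j)" if "j < length ?W" for j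
    using l1_defect_basis[OF L] that by simp
  define z where "z n = (\<Sum>j<length ?W. (?W ! j) n * c j)" for n
  have l1_z: "l1 z"
    unfolding z_def by (rule l1_sum) (simp add: l1_W)
  have "z n = 0" for n
  proof (rule coeffs_eq_0_if_real_powser_eq_0[OF l1_z[unfolded l1_def]])
    fix t :: real
    assume "0 < t" "t < 1"
    then have t: "norm (of_real t :: quaternion) < 1"
      by simp
    have "series_eval z (of_real t) = (\<Sum>j<length ?W. series_eval (?W ! j) (of_real t) * c j)"
      unfolding z_def using t by (intro series_eval_sum) (simp_all add: l1_W)
    then have "series_eval z (of_real t) = 0"
      using eval_eq_0[OF t] by simp
    then show "(\<Sum>n. t ^ n *\<^sub>R z n) = 0"
      by (simp add: series_eval_def scaleR_conv_of_real)
  qed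
  then have "0 = hinner (?W ! i) z"
    by (simp add: hinner_def)
  also have "\<dots> = (\<Sum>j<length ?W. hinner (?W ! i) (?W ! j) * c j)"
    unfolding z_def using i l1_W by (subst hinner_sum_right) (simp_all add: hinner_mult_right)
  also have "\<dots> = (\<Sum>j<length ?W. if i = j then c j else 0)"
    using L i by (intro sum.cong) (simp_all add: hinner_defect_basis length_defect_basis)
  finally show "c i = 0"
    using i by simp
qed

section \<open>Dimension of the kernel span\<close>

lemma ball_qball_iff: "(\<forall>p\<in>qball. R p) \<longleftrightarrow> (\<forall>P. norm P < 1 \<longrightarrow> R (Rep_quaternion P))"
  by (metis Abs_quaternion_inverse Rep_quaternion_inverse UNIV_I mem_Collect_eq qball_def
      norm_quaternion_def)

lemma Rep_quaternion_sum_mult: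
  "Rep_quaternion (\<Sum>i\<in>A. X i * Y i) = (\<Sum>i\<in>A. qmul (Rep_quaternion (X i)) (Rep_quaternion (Y i)))"
  by (simp add: Rep_quaternion_sum)

lemma component_in_kernel_span:
  fixes K :: "quat \<Rightarrow> quat \<Rightarrow> quat" and E :: "nat \<Rightarrow> quaternion \<Rightarrow> quaternion"
  assumes kernel: "\<And>P Q. norm P < 1 \<Longrightarrow> norm Q < 1 \<Longrightarrow>
      K (Rep_quaternion P) (Rep_quaternion Q) = Rep_quaternion (\<Sum>j<d. E j P * hcnj (E j Q))"
    and independent: "\<And>c. (\<And>P. norm P < 1 \<Longrightarrow> (\<Sum>j<d. E j P * c j) = 0) \<Longrightarrow> \<forall>j<d. c j = 0"
    and "k < d"
  shows "(\<lambda>p. Rep_quaternion (E k (Abs_quaternion p))) \<in> kernel_span K"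
proof -
  define G where "G = (\<lambda>Q j. hcnj (E j Q)) ` {Q. norm Q < 1}"
  have "\<forall>c. (\<forall>g\<in>G. (\<Sum>j<d. c j * g j) = 0) \<longrightarrow> (\<forall>j<d. c j = 0)"
  proof (rule allI, rule impI)
    fix c
    assume "\<forall>g\<in>G. (\<Sum>j<d. c j * g j) = 0"
    then have "hcnj (\<Sum>j<d. c j * hcnj (E j P)) = 0" if "norm P < 1" for P
      using that by (simp add: G_def)
    then have "\<forall>j<d. hcnj (c j) = 0"
      by (intro independent) (simp add: hcnj_sum hcnj_mult)
    then show "\<forall>j<d. c j = 0"
      by simp
  qed
  then obtain N :: nat and gs as where "\<forall>i<N. gs i \<in> G"
    and delta: "\<forall>j<d. (if j = k then 1 else 0) = (\<Sum>i<N. gs i j * as i)"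
    using right_span_if_no_left_annihilator[where v = "\<lambda>j. if j = k then 1 else 0"] by blast
  then have "\<forall>i. \<exists>Q. i < N \<longrightarrow> norm Q < 1 \<and> gs i = (\<lambda>j. hcnj (E j Q))"
    by (auto simp: G_def)
  then obtain Qs where Qs: "\<forall>i<N. norm (Qs i) < 1 \<and> gs i = (\<lambda>j. hcnj (E j (Qs i)))"
    by metis
  have "Rep_quaternion (E k P) =
      (\<Sum>i<N. qmul (K (Rep_quaternion P) (Rep_quaternion (Qs i))) (Rep_quaternion (as i)))"
    if "norm P < 1" for P
  proof -
    have "(\<Sum>i<N. qmul (K (Rep_quaternion P) (Rep_quaternion (Qs i))) (Rep_quaternion (as i))) =
        Rep_quaternion (\<Sum>i<N. (\<Sum>j<d. E j P * gs i j) * as i)"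
      using Qs that by (simp add: kernel Rep_quaternion_sum_mult)
    also have "(\<Sum>i<N. (\<Sum>j<d. E j P * gs i j) * as i) = (\<Sum>j<d. E j P * (if j = k then 1 else 0))"
      using delta
      by (simp add: sum_distrib_left sum_distrib_right mult.assoc sum.swap[of _ "{..<N}"])
    also have "\<dots> = E k P"
      using \<open>k < d\<close> by (simp add: if_distrib cong: if_cong)
    finally show ?thesis ..
  qed
  then show ?thesis
    unfolding kernel_span_def mem_Collect_eq ball_qball_iff
    using Qs by (intro exI[of _ N] exI[of _ "\<lambda>i. Rep_quaternion (Qs i)"]
        exI[of _ "\<lambda>i. Rep_quaternion (as i)"]) (simp add: ball_qball_iff[symmetric] qball_def
        norm_quaternion_def Rep_quaternion_inverse)
qed

lemma kernel_span_subset_components_span: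
  fixes K :: "quat \<Rightarrow> quat \<Rightarrow> quat" and E :: "nat \<Rightarrow> quaternion \<Rightarrow> quaternion"
  assumes kernel: "\<And>P Q. norm P < 1 \<Longrightarrow> norm Q < 1 \<Longrightarrow>
      K (Rep_quaternion P) (Rep_quaternion Q) = Rep_quaternion (\<Sum>j<d. E j P * hcnj (E j Q))"
    and "f \<in> kernel_span K"
  shows "\<exists>a. \<forall>p\<in>qball. f p = (\<Sum>i<d. qmul (Rep_quaternion (E i (Abs_quaternion p))) (a i))"
proof -
  obtain N :: nat and qs as where qs: "\<forall>i<N. qs i \<in> qball"
    and f: "\<forall>p\<in>qball. f p = (\<Sum>i<N. qmul (K p (qs i)) (as i))"
    using \<open>f \<in> kernel_span K\<close> unfolding kernel_span_def by blast
  define Q where "Q i = Abs_quaternion (qs i)" for i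
  have Q: "norm (Q i) < 1" "qs i = Rep_quaternion (Q i)" if "i < N" for i
    using qs that by (simp_all add: Q_def qball_def Abs_quaternion_simps Abs_quaternion_inverse)
  define c where "c j = (\<Sum>i<N. hcnj (E j (Q i)) * Abs_quaternion (as i))" for j
  have "f (Rep_quaternion P) = (\<Sum>j<d. qmul (Rep_quaternion (E j P)) (Rep_quaternion (c j)))"
    if "norm P < 1" for P
  proof -
    have "f (Rep_quaternion P) =
        Rep_quaternion (\<Sum>i<N. (\<Sum>j<d. E j P * hcnj (E j (Q i))) * Abs_quaternion (as i))"
      using f that Q by (simp add: ball_qball_iff kernel Rep_quaternion_sum_mult Abs_quaternion_inverse)
    also have "(\<Sum>i<N. (\<Sum>j<d. E j P * hcnj (E j (Q i))) * Abs_quaternion (as i)) =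
        (\<Sum>j<d. E j P * c j)"
      by (simp add: c_def sum_distrib_left sum_distrib_right mult.assoc sum.swap[of _ "{..<N}"])
    finally show ?thesis
      by (simp add: Rep_quaternion_sum_mult)
  qed
  then show ?thesis
    by (intro exI[of _ "\<lambda>j. Rep_quaternion (c j)"]) (simp add: ball_qball_iff Rep_quaternion_inverse)
qed

lemma rdim_eq_kernel_span_finite_rank:
  fixes K :: "quat \<Rightarrow> quat \<Rightarrow> quat" and E :: "nat \<Rightarrow> quaternion \<Rightarrow> quaternion"
  assumes kernel: "\<And>P Q. norm P < 1 \<Longrightarrow> norm Q < 1 \<Longrightarrow>
      K (Rep_quaternion P) (Rep_quaternion Q) = Rep_quaternion (\<Sum>j<d. E j P * hcnj (E j Q))"
    and independent: "\<And>c. (\<And>P. norm P < 1 \<Longrightarrow> (\<Sum>j<d. E j P * c j) = 0) \<Longrightarrow> \<forall>j<d. c j = 0"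
  shows "rdim_eq (kernel_span K) d"
  unfolding rdim_eq_def
proof (intro exI[of _ "\<lambda>i p. Rep_quaternion (E i (Abs_quaternion p))"] conjI allI impI ballI)
  show "(\<lambda>p. Rep_quaternion (E i (Abs_quaternion p))) \<in> kernel_span K" if "i < d" for i
    using kernel independent that by (rule component_in_kernel_span)
  show "\<exists>a. \<forall>p\<in>qball. f p = (\<Sum>i<d. qmul (Rep_quaternion (E i (Abs_quaternion p))) (a i))"
    if "f \<in> kernel_span K" for f
    using kernel that by (rule kernel_span_subset_components_span)
  fix a i
  assume "\<forall>p\<in>qball. (\<Sum>i<d. qmul (Rep_quaternion (E i (Abs_quaternion p))) (a i)) = 0" "i < d"
  then have "(\<Sum>j<d. E j P * Abs_quaternion (a j)) = 0" if "norm P < 1" for P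
    using that
    by (simp add: ball_qball_iff quaternion_eq_iff Rep_quaternion_sum_mult Rep_quaternion_inverse
        Abs_quaternion_inverse)
  then show "a i = 0"
    using independent \<open>i < d\<close> by (metis Abs_quaternion_eq_0_iff)
qed

lemma qeval_Rep_quaternion:
  assumes "l1 (\<lambda>n. Abs_quaternion (a n))" and "norm P < 1"
  shows "qeval a (Rep_quaternion P) = Rep_quaternion (series_eval (\<lambda>n. Abs_quaternion (a n)) P)"
  unfolding series_eval_def qeval_def
  by (simp add: Rep_quaternion_suminf[OF summable_series_eval[OF assms(2,1)]] Rep_quaternion_power
      Abs_quaternion_inverse)

lemma kernelB_blaschke_prod:
  assumes "\<forall>cm\<in>set cms. fst cm \<in> qball - {0}" and "\<forall>al\<in>set als. \<forall>a\<in>set al. a \<in> qball - {0}"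
    and P: "norm P < 1" and Q: "norm Q < 1"
  defines "W \<equiv> defect_basis (blaschke_zeros cms als)"
  shows "kernelB (blaschke_prod cms als) (Rep_quaternion P) (Rep_quaternion Q) =
    Rep_quaternion (\<Sum>j<length W. series_eval (W ! j) P * hcnj (series_eval (W ! j) Q))"
proof -
  let ?L = "blaschke_zeros cms als" and ?b = "blaschke_prod cms als"
  have L: "set ?L \<subseteq> ball 0 1 - {0}"
    by (rule blaschke_zeros_in_ball[OF assms(1,2)])
  have b_fps: "to_fps ?b = prod_list (map blaschke_fps ?L)"
    using assms(1,2) by (intro to_fps_blaschke_prod) auto
  have b: "(\<lambda>n. Abs_quaternion (?b n)) = blaschke_seq ?L"
  proof
    fix n
    show "Abs_quaternion (?b n) = blaschke_seq ?L n"
      using arg_cong[OF b_fps, of "\<lambda>f. f $ n"] by (simp add: blaschke_seq_def)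
  qed
  have l1_b: "l1 (\<lambda>n. Abs_quaternion (?b n))"
    unfolding b by (rule l1_blaschke_seq[OF L])
  let ?term = "\<lambda>n. P ^ n * (1 - series_eval (blaschke_seq ?L) P * hcnj (series_eval (blaschke_seq ?L) Q))
      * hcnj (Q ^ n)"
  have sums: "?term sums (\<Sum>j<length W. series_eval (W ! j) P * hcnj (series_eval (W ! j) Q))"
    using kernel_series_blaschke_seq_sums[OF L P Q] by (simp add: W_def sum_list_sum_nth atLeast0LessThan)
  have "kernelB ?b (Rep_quaternion P) (Rep_quaternion Q) = (\<Sum>n. Rep_quaternion (?term n))"
    unfolding kernelB_def qeval_Rep_quaternion[OF l1_b P] qeval_Rep_quaternion[OF l1_b Q] b
    by (simp only: Rep_quaternion_simps Rep_quaternion_power Rep_quaternion_hcnj)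
  also have "\<dots> = Rep_quaternion (\<Sum>n. ?term n)"
    by (rule Rep_quaternion_suminf[OF sums_summable[OF sums], symmetric])
  finally show ?thesis
    using sums by (simp add: sums_iff)
qed

theorem mainTheorem4:
  fixes cms :: "(quat \<times> nat) list" and als :: "quat list list"
  assumes "\<forall>cm\<in>set cms. fst cm \<in> qball - {0}"
    and "\<forall>al\<in>set als. \<forall>a\<in>set al. a \<in> qball - {0}"
  shows "rdim_eq (kernel_span (kernelB (blaschke_prod cms als))) (blaschke_degree cms als)"
proof -
  let ?W = "defect_basis (blaschke_zeros cms als)"
  have L: "set (blaschke_zeros cms als) \<subseteq> ball 0 1 - {0}"
    by (rule blaschke_zeros_in_ball[OF assms])
  have "blaschke_degree cms als = length ?W"
    by (simp add: length_defect_basis length_blaschke_zeros)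
  then show ?thesis
    using rdim_eq_kernel_span_finite_rank[where E = "\<lambda>j. series_eval (?W ! j)",
        OF kernelB_blaschke_prod[OF assms] defect_basis_independent[OF L]]
    by simp
qed

end
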